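(* Let $\mathcal{F}_a$ be a nonempty class of functions $\{1,2,\dots\}\to\mathbb{R}_+$ that either satisfies (KU1), or satisfies (KU2a) and (KU2b). Realize the sample as $X_i=\exp(G^{-1}(1-U_i))$ with $U_1,U_2,\dots$ i.i.d. uniform on $(0,1)$, so that $\log X_{n-j+1,n}=G^{-1}(1-U_{j,n})$, and set $V_n(f)=\sum_{j=1}^{k}f(j)\log(U_{j+1,n}/U_{j,n})$ and $V_n^*(f)=\sigma_n(f)^{-1}(V_n(f)-a_n(f))$. Suppose that $\{V_n^*(f),f\in\mathcal{F}_a\}$ converges weakly in $\ell^\infty(\mathcal{F}_a)$. Then: if $F\in D(\Lambda)$ and (CU3) holds on $\mathcal{F}_a$ for some $\lambda>1$, $$\sup_{f\in\mathcal{F}_a}\Big|(s(k/n)\sigma_n(f))^{-1}\big(T_n(f)-a_n(f)s(k/n)\big)-V_n^*(f)\Big|\to0$$ in outer probability; and if $F\in D(\phi_{1/\gamma})$, $\gamma>0$, and (CU1), (CU2) hold on $\mathcal{F}_a$ for some $\lambda>1$, $$\sup_{f\in\mathcal{F}_a}\Big|\frac{a_n(f)}{\sigma_n(f)}\Big(\frac{T_n(f)}{a_n(f)}-\gamma\Big)-\gamma V_n^*(f)\Big|\to0$$ in outer probability.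
   Context: $X>1$ is a random variable with distribution function $F$, $G(x)=F(e^x)$ is the distribution function of $\log X$, $G^{-1}(v)=\inf\{x:G(x)\ge v\}$; $X_{1,n}\le\dots\le X_{n,n}$ and $U_{1,n}\le\dots\le U_{n,n}$ are order statistics of $X_1,\dots,X_n$ and $U_1,\dots,U_n$, with $U_{n+1,n}:=1$. $k=k(n)$ are integers, $1\le k\le n$, $k\to\infty$, $k/n\to0$. For $f:\{1,2,\dots\}\to\mathbb{R}_+$: $T_n(f)=\sum_{j=1}^{k}f(j)(\log X_{n-j+1,n}-\log X_{n-j,n})$, $a_n(f)=\sum_{j=1}^kf(j)j^{-1}$, $\sigma_n^2(f)=\sum_{j=1}^kf(j)^2j^{-2}$, $A(2,f)=\sum_{j\ge1}f(j)^2j^{-2}$, $B_n(f)=\sigma_n(f)^{-1}\max_{1\le j\le k}f(j)j^{-1}$. (KU1): $0<\inf_{f\in\mathcal{F}_a}A(2,f)<\sup_{f\in\mathcal{F}_a}A(2,f)<\infty$. (KU2a): $\lim_n\sup_{f\in\mathcal{F}_a}B_n(f)=0$. (KU2b): for all $f_1,f_2\in\mathcal{F}_a$, $\lim_n(\sigma_n(f_1)\sigma_n(f_2))^{-1}\sum_{j=1}^kf_1(j)f_2(j)j^{-2}$ exists. $F\in D(\Lambda)$: $F^n(a_nx+b_n)\to\exp(-e^{-x})$ for some $a_n>0,b_n$; $F\in D(\phi_{1/\gamma})$: $F^n(a_nx+b_n)\to\exp(-x^{-1/\gamma})\mathbb{I}_{x>0}$. Representations: if $F\in D(\phi_{1/\gamma})$,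 $G^{-1}(1-u)=\log c+\log(1+p(u))-\gamma\log u+\int_u^1b(t)t^{-1}dt$; if $F\in D(\Lambda)$, $G^{-1}(1-u)=d-s(u)+\int_u^1s(t)t^{-1}dt$, $s(u)=c(1+p(u))\exp(\int_u^1b(t)t^{-1}dt)$; $0<u<1$, $c>0$, $d\in\mathbb{R}$, $p(u),b(u)\to0$ as $u\to0$. $g_{1,n}(p,\lambda)=\sup_{0<u\le\lambda k/n}|p(u)|$, $g_{2,n}(b,\lambda)=\sup_{0<u\le\lambda k/n}|b(u)|$, $d_n(p,b,\lambda)=\max(g_{1,n}(p,\lambda),g_{2,n}(b,\lambda)\log k)$. (CU1): $\sup_{f\in\mathcal{F}_a}g_{1,n}(p,\lambda)\sigma_n(f)^{-1}\sum_{j=1}^kf(j)\to0$; (CU2): $\sup_{f\in\mathcal{F}_a}g_{2,n}(b,\lambda)\sigma_n(f)^{-1}\sum_{j=1}^kf(j)\to0$; (CU3): $\sup_{f\in\mathcal{F}_a}d_n(p,b,\lambda)\sigma_n(f)^{-1}\sum_{j=1}^kf(j)\to0$. *)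

theory Defs
  imports "HOL-Probability.Probability"
begin

definition linf :: "'i set \<Rightarrow> ('i \<Rightarrow> real) set" where
  "linf I = {z. bounded (z ` I) \<and> (\<forall>i. i \<notin> I \<longrightarrow> z i = 0)}"

definition supdist :: "'i set \<Rightarrow> ('i \<Rightarrow> real) \<Rightarrow> ('i \<Rightarrow> real) \<Rightarrow> real" where
  "supdist I z w = (SUP i\<in>I. \<bar>z i - w i\<bar>)"

definition linf_open :: "'i set \<Rightarrow> ('i \<Rightarrow> real) set \<Rightarrow> bool" where
  "linf_open I S \<longleftrightarrow> S \<subseteq> linf I \<and>
     (\<forall>z\<in>S. \<exists>e>0. \<forall>w\<in>linf I. supdist I z w < e \<longrightarrow> w \<in> S)"

definition linf_bcont :: "'i set \<Rightarrow> (('i \<Rightarrow> real) \<Rightarrow> real) \<Rightarrow> bool" where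
  "linf_bcont I h \<longleftrightarrow> bounded (h ` linf I) \<and>
     (\<forall>z\<in>linf I. \<forall>e>0. \<exists>d>0. \<forall>w\<in>linf I. supdist I z w < d \<longrightarrow> \<bar>h w - h z\<bar> < e)"

definition outer_exp :: "'a measure \<Rightarrow> ('a \<Rightarrow> real) \<Rightarrow> real" where
  "outer_exp M T = Inf {integral\<^sup>L M V | V. V \<in> borel_measurable M \<and> integrable M V \<and>
                          (\<forall>\<omega>\<in>space M. T \<omega> \<le> V \<omega>)}"

definition outer_prob :: "'a measure \<Rightarrow> 'a set \<Rightarrow> real" where
  "outer_prob M A = Inf {measure M B | B. B \<in> sets M \<and> A \<subseteq> B}"

definition weak_conv_linf :: "'a measure \<Rightarrow> 'i set \<Rightarrow> (nat \<Rightarrow> 'a \<Rightarrow> ('i \<Rightarrow> real)) \<Rightarrow> bool" where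
  "weak_conv_linf M I X \<longleftrightarrow>
     (\<forall>\<^sub>F n in sequentially. \<forall>\<omega>\<in>space M. X n \<omega> \<in> linf I) \<and>
     (\<exists>L. prob_space L \<and> space L = linf I \<and> sets L = sigma_sets (linf I) {S. linf_open I S} \<and>
        (\<forall>h. linf_bcont I h \<longrightarrow>
           (\<lambda>n. outer_exp M (\<lambda>\<omega>. h (X n \<omega>))) \<longlonglongrightarrow> integral\<^sup>L L h))"

definition conv_outer_prob :: "'a measure \<Rightarrow> (nat \<Rightarrow> 'a \<Rightarrow> ereal) \<Rightarrow> bool" where
  "conv_outer_prob M Z \<longleftrightarrow>
     (\<forall>e>0. (\<lambda>n. outer_prob M {\<omega>\<in>space M. Z n \<omega> > ereal e}) \<longlonglongrightarrow> 0)"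

definition ostat :: "nat \<Rightarrow> (nat \<Rightarrow> real) \<Rightarrow> nat \<Rightarrow> real" where
  "ostat n x m = sort (map x [1..<n+1]) ! (m - 1)"

definition Uos :: "nat \<Rightarrow> (nat \<Rightarrow> real) \<Rightarrow> nat \<Rightarrow> real" where
  "Uos n u j = (if j = n + 1 then 1 else ostat n u j)"

definition Ginv :: "(real \<Rightarrow> real) \<Rightarrow> real \<Rightarrow> real" where
  "Ginv G v = Inf {x. G x \<ge> v}"

definition an :: "nat \<Rightarrow> (nat \<Rightarrow> real) \<Rightarrow> real" where
  "an k f = (\<Sum>j=1..k. f j / real j)"

definition sigman :: "nat \<Rightarrow> (nat \<Rightarrow> real) \<Rightarrow> real" where
  "sigman k f = sqrt (\<Sum>j=1..k. (f j)\<^sup>2 / (real j)\<^sup>2)"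

definition A2 :: "(nat \<Rightarrow> real) \<Rightarrow> real" where
  "A2 f = (\<Sum>j. (f (Suc j))\<^sup>2 / (real (Suc j))\<^sup>2)"

definition Bn :: "nat \<Rightarrow> (nat \<Rightarrow> real) \<Rightarrow> real" where
  "Bn k f = Max ((\<lambda>j. f j / real j) ` {1..k}) / sigman k f"

definition Tn :: "nat \<Rightarrow> nat \<Rightarrow> (nat \<Rightarrow> real) \<Rightarrow> (nat \<Rightarrow> real) \<Rightarrow> real" where
  "Tn k n x f = (\<Sum>j=1..k. f j * (ln (ostat n x (n - j + 1)) - ln (ostat n x (n - j))))"

definition Vn :: "nat \<Rightarrow> nat \<Rightarrow> (nat \<Rightarrow> real) \<Rightarrow> (nat \<Rightarrow> real) \<Rightarrow> real" where
  "Vn k n u f = (\<Sum>j=1..k. f j * ln (Uos n u (j + 1) / Uos n u j))"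

definition Vstar :: "nat \<Rightarrow> nat \<Rightarrow> (nat \<Rightarrow> real) \<Rightarrow> (nat \<Rightarrow> real) \<Rightarrow> real" where
  "Vstar k n u f = (Vn k n u f - an k f) / sigman k f"

definition Vproc :: "(nat \<Rightarrow> real) set \<Rightarrow> (nat \<Rightarrow> nat) \<Rightarrow> (nat \<Rightarrow> 'a \<Rightarrow> real) \<Rightarrow> nat \<Rightarrow> 'a \<Rightarrow> ((nat \<Rightarrow> real) \<Rightarrow> real)" where
  "Vproc Fa k U n \<omega> = (\<lambda>f. if f \<in> Fa then Vstar (k n) n (\<lambda>i. U i \<omega>) f else 0)"

definition Xsample :: "(real \<Rightarrow> real) \<Rightarrow> (nat \<Rightarrow> 'a \<Rightarrow> real) \<Rightarrow> 'a \<Rightarrow> nat \<Rightarrow> real" where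
  "Xsample F U \<omega> i = exp (Ginv (\<lambda>x. F (exp x)) (1 - U i \<omega>))"

definition KU1 :: "(nat \<Rightarrow> real) set \<Rightarrow> bool" where
  "KU1 Fa \<longleftrightarrow> (\<forall>f\<in>Fa. summable (\<lambda>j. (f (Suc j))\<^sup>2 / (real (Suc j))\<^sup>2)) \<and>
     bdd_above (A2 ` Fa) \<and> 0 < (INF f\<in>Fa. A2 f) \<and> (INF f\<in>Fa. A2 f) < (SUP f\<in>Fa. A2 f)"

definition KU2a :: "(nat \<Rightarrow> real) set \<Rightarrow> (nat \<Rightarrow> nat) \<Rightarrow> bool" where
  "KU2a Fa k \<longleftrightarrow> (\<lambda>n. SUP f\<in>Fa. ereal (Bn (k n) f)) \<longlonglongrightarrow> 0"

definition KU2b :: "(nat \<Rightarrow> real) set \<Rightarrow> (nat \<Rightarrow> nat) \<Rightarrow> bool" where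
  "KU2b Fa k \<longleftrightarrow> (\<forall>f1\<in>Fa. \<forall>f2\<in>Fa. convergent (\<lambda>n.
      (\<Sum>j=1..k n. f1 j * f2 j / (real j)\<^sup>2) / (sigman (k n) f1 * sigman (k n) f2)))"

definition domain_Gumbel :: "(real \<Rightarrow> real) \<Rightarrow> bool" where
  "domain_Gumbel F \<longleftrightarrow> (\<exists>a b :: nat \<Rightarrow> real. (\<forall>n. a n > 0) \<and>
     (\<forall>x. (\<lambda>n. (F (a n * x + b n)) ^ n) \<longlonglongrightarrow> exp (- exp (- x))))"

definition domain_Frechet :: "(real \<Rightarrow> real) \<Rightarrow> real \<Rightarrow> bool" where
  "domain_Frechet F \<gamma> \<longleftrightarrow> (\<exists>a b :: nat \<Rightarrow> real. (\<forall>n. a n > 0) \<and>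
     (\<forall>x. (\<lambda>n. (F (a n * x + b n)) ^ n) \<longlonglongrightarrow>
            (if x > 0 then exp (- (x powr (- 1 / \<gamma>))) else 0)))"

definition gumbel_s :: "real \<Rightarrow> (real \<Rightarrow> real) \<Rightarrow> (real \<Rightarrow> real) \<Rightarrow> real \<Rightarrow> real" where
  "gumbel_s c p b u = c * (1 + p u) * exp (integral {u..1} (\<lambda>t. b t / t))"

definition Gumbel_rep :: "(real \<Rightarrow> real) \<Rightarrow> real \<Rightarrow> real \<Rightarrow> (real \<Rightarrow> real) \<Rightarrow> (real \<Rightarrow> real) \<Rightarrow> bool" where
  "Gumbel_rep F c d p b \<longleftrightarrow> c > 0 \<and> (p \<longlongrightarrow> 0) (at_right 0) \<and> (b \<longlongrightarrow> 0) (at_right 0) \<and>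
     (\<forall>u\<in>{0<..<1}. (\<lambda>t. b t / t) integrable_on {u..1} \<and>
        (\<lambda>t. gumbel_s c p b t / t) integrable_on {u..1} \<and>
        Ginv (\<lambda>x. F (exp x)) (1 - u) =
          d - gumbel_s c p b u + integral {u..1} (\<lambda>t. gumbel_s c p b t / t))"

definition Frechet_rep :: "(real \<Rightarrow> real) \<Rightarrow> real \<Rightarrow> real \<Rightarrow> (real \<Rightarrow> real) \<Rightarrow> (real \<Rightarrow> real) \<Rightarrow> bool" where
  "Frechet_rep F \<gamma> c p b \<longleftrightarrow> c > 0 \<and> (p \<longlongrightarrow> 0) (at_right 0) \<and> (b \<longlongrightarrow> 0) (at_right 0) \<and>
     (\<forall>u\<in>{0<..<1}. (\<lambda>t. b t / t) integrable_on {u..1} \<and>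
        Ginv (\<lambda>x. F (exp x)) (1 - u) =
          ln c + ln (1 + p u) - \<gamma> * ln u + integral {u..1} (\<lambda>t. b t / t))"

definition g1n :: "(real \<Rightarrow> real) \<Rightarrow> (nat \<Rightarrow> nat) \<Rightarrow> real \<Rightarrow> nat \<Rightarrow> ereal" where
  "g1n p k lam n = (SUP u\<in>{0<..lam * real (k n) / real n}. ereal \<bar>p u\<bar>)"

definition g2n :: "(real \<Rightarrow> real) \<Rightarrow> (nat \<Rightarrow> nat) \<Rightarrow> real \<Rightarrow> nat \<Rightarrow> ereal" where
  "g2n b k lam n = (SUP u\<in>{0<..lam * real (k n) / real n}. ereal \<bar>b u\<bar>)"

definition dn :: "(real \<Rightarrow> real) \<Rightarrow> (real \<Rightarrow> real) \<Rightarrow> (nat \<Rightarrow> nat) \<Rightarrow> real \<Rightarrow> nat \<Rightarrow> ereal" where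
  "dn p b k lam n = max (g1n p k lam n) (g2n b k lam n * ereal (ln (real (k n))))"

definition CU :: "(nat \<Rightarrow> real) set \<Rightarrow> (nat \<Rightarrow> nat) \<Rightarrow> (nat \<Rightarrow> ereal) \<Rightarrow> bool" where
  "CU Fa k g \<longleftrightarrow> (\<lambda>n. SUP f\<in>Fa. g n * ereal ((\<Sum>j=1..k n. f j) / sigman (k n) f)) \<longlonglongrightarrow> 0"

definition CU1 :: "(nat \<Rightarrow> real) set \<Rightarrow> (nat \<Rightarrow> nat) \<Rightarrow> (real \<Rightarrow> real) \<Rightarrow> real \<Rightarrow> bool" where
  "CU1 Fa k p lam \<longleftrightarrow> CU Fa k (g1n p k lam)"

definition CU2 :: "(nat \<Rightarrow> real) set \<Rightarrow> (nat \<Rightarrow> nat) \<Rightarrow> (real \<Rightarrow> real) \<Rightarrow> real \<Rightarrow> bool" where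
  "CU2 Fa k b lam \<longleftrightarrow> CU Fa k (g2n b k lam)"

definition CU3 :: "(nat \<Rightarrow> real) set \<Rightarrow> (nat \<Rightarrow> nat) \<Rightarrow> (real \<Rightarrow> real) \<Rightarrow> (real \<Rightarrow> real) \<Rightarrow> real \<Rightarrow> bool" where
  "CU3 Fa k p b lam \<longleftrightarrow> CU Fa k (dn p b k lam)"

end

theory Submission
  imports Defs
begin

text \<open>Write \<open>w_j = U_{j,n}\<close> and \<open>Q(x) = G^{-1}(1 - x)\<close>. Since \<open>Q\<close> is antitone, \<open>log X_{n-j+1,n} = Q(w_j)\<close>,
  so \<open>T_n(f) = \<Sum>_j f(j) (Q(w_j) - Q(w_{j+1}))\<close> while \<open>V_n(f) = \<Sum>_j f(j) log (w_{j+1} / w_j)\<close>. By the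
  representation of \<open>Q\<close>, each increment \<open>Q(w_j) - Q(w_{j+1})\<close> equals \<open>\<gamma> log (w_{j+1} / w_j)\<close> in the Frechet
  case, resp. \<open>s(k/n) log (w_{j+1} / w_j)\<close> in the Gumbel case, up to an error of order
  \<open>sup |p| + sup |b| log (w_{j+1} / w_j)\<close> over \<open>(0, \<lambda>k/n]\<close>, provided \<open>w_1, \<dots>, w_{k+1}\<close> lie in
  \<open>(0, \<lambda>k/n]\<close> and, in the Gumbel case, above \<open>e^{-K}/n\<close>, where \<open>s\<close> varies only by a factor \<open>1 + O(d_n)\<close>.
  Normalising by \<open>\<sigma>_n(f) \<le> a_n(f) \<le> \<Sum>_j f(j)\<close>, the errors become (CU) quantities times \<open>1 + |V*_n(f)|\<close>,
  uniformly in \<open>f\<close>. Such good samples have probability tending to one (Chebyshev for the binomial count of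
  the \<open>U_i \<le> \<lambda>k/n\<close>, a union bound for \<open>U_i < e^{-K}/n\<close>), and the weakly convergent, hence asymptotically
  tight, process \<open>V*_n\<close> is bounded outside an event of small outer probability.\<close>

section \<open>Outer probability and asymptotic tightness\<close>

lemma outer_prob_le_measure:
  assumes "B \<in> sets M" "A \<subseteq> B"
  shows "outer_prob M A \<le> measure M B"
  unfolding outer_prob_def
  by (rule cInf_lower) (use assms in \<open>auto intro: bdd_belowI[where m=0]\<close>)

lemma outer_prob_nonneg:
  assumes "A \<subseteq> space M"
  shows "0 \<le> outer_prob M A"
  unfolding outer_prob_def
  by (rule cInf_greatest) (use assms in auto)

lemma outer_prob_subset_Un_le:
  assumes B: "B \<in> sets M" and S: "S \<subseteq> space M" and A: "A \<subseteq> B \<union> S"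
  shows "outer_prob M A \<le> measure M B + outer_prob M S"
proof -
  have "outer_prob M A - measure M B \<le> outer_prob M S"
    unfolding outer_prob_def[of M S]
  proof (rule cInf_greatest)
    show "{measure M C |C. C \<in> sets M \<and> S \<subseteq> C} \<noteq> {}" using S by blast
    fix x assume "x \<in> {measure M C |C. C \<in> sets M \<and> S \<subseteq> C}"
    then obtain C where C: "x = measure M C" "C \<in> sets M" "S \<subseteq> C" by blast
    have "outer_prob M A \<le> measure M (B \<union> C)"
      by (rule outer_prob_le_measure) (use B C A in auto)
    also have "\<dots> \<le> measure M B + measure M C" by (rule measure_Un_le[OF B C(2)])
    finally show "outer_prob M A - measure M B \<le> x" using C by simp
  qed
  then show ?thesis by simp
qed

lemma outer_prob_le_outer_exp:
  assumes "prob_space M" and g01: "\<And>\<omega>. \<omega> \<in> space M \<Longrightarrow> 0 \<le> g \<omega> \<and> g \<omega> \<le> 1"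
    and A: "A \<subseteq> {\<omega>\<in>space M. g \<omega> = 1}"
  shows "outer_prob M A \<le> outer_exp M g"
  unfolding outer_exp_def
proof (rule cInf_greatest)
  interpret prob_space M by fact
  show "{integral\<^sup>L M V |V. V \<in> borel_measurable M \<and> integrable M V \<and> (\<forall>\<omega>\<in>space M. g \<omega> \<le> V \<omega>)} \<noteq> {}"
    using g01 by (auto intro!: exI[where x="\<lambda>_. 1"])
  fix x assume "x \<in> {integral\<^sup>L M V |V. V \<in> borel_measurable M \<and> integrable M V \<and> (\<forall>\<omega>\<in>space M. g \<omega> \<le> V \<omega>)}"
  then obtain V where V: "x = integral\<^sup>L M V" "V \<in> borel_measurable M" "integrable M V"
      "\<forall>\<omega>\<in>space M. g \<omega> \<le> V \<omega>"
    by blast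
  have "outer_prob M A \<le> measure M {\<omega>\<in>space M. 1 \<le> V \<omega>}"
  proof (rule outer_prob_le_measure)
    show "{\<omega>\<in>space M. 1 \<le> V \<omega>} \<in> sets M" using V(2) by measurable
    show "A \<subseteq> {\<omega>\<in>space M. 1 \<le> V \<omega>}" using A V(4) by force
  qed
  also have "\<dots> \<le> integral\<^sup>L M V / 1"
    by (rule integral_Markov_inequality_measure[where A="space M"])
       (use V g01 in \<open>auto intro!: AE_I2 order_trans[OF _ V(4)[rule_format]]\<close>)
  finally show "outer_prob M A \<le> x" using V(1) by simp
qed

lemma conv_outer_probI:
  assumes cover: "\<And>e \<delta>. 0 < e \<Longrightarrow> 0 < \<delta> \<Longrightarrow> \<forall>\<^sub>F n in sequentially. \<exists>B S. B \<in> sets M \<and>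
      measure M B < \<delta> \<and> S \<subseteq> space M \<and> outer_prob M S < \<delta> \<and> {\<omega>\<in>space M. ereal e < Z n \<omega>} \<subseteq> B \<union> S"
  shows "conv_outer_prob M Z"
  unfolding conv_outer_prob_def
proof (intro allI impI LIMSEQ_I)
  fix e \<delta> :: real assume e: "0 < e" and \<delta>: "0 < \<delta>"
  show "\<exists>N. \<forall>n\<ge>N. norm (outer_prob M {\<omega>\<in>space M. ereal e < Z n \<omega>} - 0) < \<delta>"
    unfolding eventually_sequentially[symmetric]
    using cover[OF e half_gt_zero[OF \<delta>]]
  proof eventually_elim
    case (elim n)
    then obtain B S where BS: "B \<in> sets M" "measure M B < \<delta>/2" "S \<subseteq> space M" "outer_prob M S < \<delta>/2"
        "{\<omega>\<in>space M. ereal e < Z n \<omega>} \<subseteq> B \<union> S"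
      by blast
    have "outer_prob M {\<omega>\<in>space M. ereal e < Z n \<omega>} \<le> measure M B + outer_prob M S"
      by (rule outer_prob_subset_Un_le[OF BS(1,3,5)])
    moreover have "0 \<le> outer_prob M {\<omega>\<in>space M. ereal e < Z n \<omega>}" by (rule outer_prob_nonneg) auto
    ultimately show ?case using BS by simp
  qed
qed

lemma linf_boundedD: "z \<in> linf I \<Longrightarrow> \<exists>B. \<forall>i\<in>I. \<bar>z i\<bar> \<le> B"
  unfolding linf_def by (auto simp: bounded_iff)

lemma zero_in_linf: "(\<lambda>_. 0) \<in> linf I"
  unfolding linf_def by (auto simp: bounded_iff)

lemma abs_diff_le_supdist:
  assumes z: "z \<in> linf I" and w: "w \<in> linf I" and i: "i \<in> I"
  shows "\<bar>z i - w i\<bar> \<le> supdist I z w"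
proof -
  obtain B C where "\<forall>i\<in>I. \<bar>z i\<bar> \<le> B" "\<forall>i\<in>I. \<bar>w i\<bar> \<le> C"
    using linf_boundedD[OF z] linf_boundedD[OF w] by blast
  then have "bdd_above ((\<lambda>i. \<bar>z i - w i\<bar>) ` I)" by (intro bdd_aboveI[where M="B+C"]) force
  then show ?thesis unfolding supdist_def using i by (rule cSUP_upper2) simp
qed

lemma supdist_commute: "supdist I z w = supdist I w z"
  unfolding supdist_def by (simp add: abs_minus_commute)

lemma supdist_triangle:
  assumes "I \<noteq> {}" "z \<in> linf I" "w \<in> linf I" "v \<in> linf I"
  shows "supdist I z v \<le> supdist I z w + supdist I w v"
  unfolding supdist_def[of I z v]
proof (rule cSUP_least)
  fix i assume i: "i \<in> I"
  have "\<bar>z i - v i\<bar> \<le> \<bar>z i - w i\<bar> + \<bar>w i - v i\<bar>" by simp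
  also have "\<dots> \<le> supdist I z w + supdist I w v"
    using abs_diff_le_supdist[OF assms(2,3) i] abs_diff_le_supdist[OF assms(3,4) i] by simp
  finally show "\<bar>z i - v i\<bar> \<le> supdist I z w + supdist I w v" .
qed (fact assms)

definition linf_ramp :: "'i set \<Rightarrow> real \<Rightarrow> ('i \<Rightarrow> real) \<Rightarrow> real" where
  "linf_ramp I m z = min 1 (max 0 (supdist I z (\<lambda>_. 0) - m))"

lemma linf_bcont_linf_ramp:
  assumes I: "I \<noteq> {}"
  shows "linf_bcont I (linf_ramp I m)"
  unfolding linf_bcont_def
proof (intro conjI ballI allI impI)
  show "bounded (linf_ramp I m ` linf I)"
    unfolding linf_ramp_def by (auto simp: bounded_iff intro!: exI[where x=1])
  fix z and e :: real assume z: "z \<in> linf I" and e: "0 < e"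
  show "\<exists>d>0. \<forall>w\<in>linf I. supdist I z w < d \<longrightarrow> \<bar>linf_ramp I m w - linf_ramp I m z\<bar> < e"
  proof (intro exI[where x=e] conjI ballI impI)
    fix w assume w: "w \<in> linf I" "supdist I z w < e"
    have "\<bar>supdist I z (\<lambda>_. 0) - supdist I w (\<lambda>_. 0)\<bar> \<le> supdist I z w"
      using supdist_triangle[OF I z w(1) zero_in_linf] supdist_triangle[OF I w(1) z zero_in_linf]
        supdist_commute[of I z w] by linarith
    then show "\<bar>linf_ramp I m w - linf_ramp I m z\<bar> < e"
      using w(2) unfolding linf_ramp_def by (simp add: abs_if min_def max_def split: if_splits)
  qed (rule e)
qed

lemma linf_bcont_borel_measurable:
  assumes "linf_bcont I h" "space L = linf I" "sets L = sigma_sets (linf I) {S. linf_open I S}"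
  shows "h \<in> borel_measurable L"
proof (rule borel_measurableI_greater)
  fix y :: real
  have "linf_open I {x\<in>linf I. y < h x}"
    unfolding linf_open_def
  proof (intro conjI ballI)
    fix z assume z: "z \<in> {x \<in> linf I. y < h x}"
    then obtain d where "0 < d" "\<forall>w\<in>linf I. supdist I z w < d \<longrightarrow> \<bar>h w - h z\<bar> < h z - y"
      using assms(1) unfolding linf_bcont_def by (metis (no_types, lifting) diff_gt_0_iff_gt mem_Collect_eq)
    then show "\<exists>e>0. \<forall>w\<in>linf I. supdist I z w < e \<longrightarrow> w \<in> {x \<in> linf I. y < h x}"
      by (intro exI[where x=d]) force
  qed auto
  then show "{x \<in> space L. y < h x} \<in> sets L" using assms(2,3) by (auto intro: sigma_sets.Basic)
qed

text \<open>Asymptotic tightness of the norms: the ramps \<open>linf_ramp I m\<close> decrease to 0 as \<open>m \<rightarrow> \<infinity>\<close>, so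
  their limit integrals become small, and the ramp dominates the indicator of \<open>supdist > m + 1\<close>.\<close>
lemma weak_conv_linf_tight:
  assumes "prob_space M" and I: "I \<noteq> {}" and W: "weak_conv_linf M I X" and \<delta>: "0 < \<delta>"
  shows "\<exists>m. \<forall>\<^sub>F n in sequentially. outer_prob M {\<omega>\<in>space M. m < supdist I (X n \<omega>) (\<lambda>_. 0)} < \<delta>"
proof -
  obtain L where L: "prob_space L" "space L = linf I" "sets L = sigma_sets (linf I) {S. linf_open I S}"
    "\<And>h. linf_bcont I h \<Longrightarrow> (\<lambda>n. outer_exp M (\<lambda>\<omega>. h (X n \<omega>))) \<longlonglongrightarrow> integral\<^sup>L L h"
    using W unfolding weak_conv_linf_def by blast
  have "(\<lambda>i. integral\<^sup>L L (linf_ramp I (real i))) \<longlonglongrightarrow> integral\<^sup>L L (\<lambda>_. 0::real)"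
  proof (rule integral_dominated_convergence[where w="\<lambda>_. 1"])
    show "integrable L (\<lambda>_. 1::real)"
      using L(1) by (rule finite_measure.integrable_const[OF prob_space.finite_measure])
    show "AE z in L. (\<lambda>i. linf_ramp I (real i) z) \<longlonglongrightarrow> 0"
    proof (rule AE_I2)
      fix z
      obtain N :: nat where "supdist I z (\<lambda>_. 0) \<le> real N" using real_arch_simple by blast
      then have "\<forall>i\<ge>N. linf_ramp I (real i) z = 0" unfolding linf_ramp_def by auto
      then show "(\<lambda>i. linf_ramp I (real i) z) \<longlonglongrightarrow> 0"
        by (intro tendsto_eventually) (auto simp: eventually_sequentially)
    qed
  qed (auto simp: linf_ramp_def intro: linf_bcont_borel_measurable[OF linf_bcont_linf_ramp[OF I] L(2,3)])
  then obtain m :: nat where m: "integral\<^sup>L L (linf_ramp I (real m)) < \<delta>"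
    using \<delta> by (metis LIMSEQ_D abs_less_iff diff_zero order.refl real_norm_def integral_zero)
  have "\<forall>\<^sub>F n in sequentially. outer_exp M (\<lambda>\<omega>. linf_ramp I (real m) (X n \<omega>)) < \<delta>"
    using order_tendstoD(2)[OF L(4)[OF linf_bcont_linf_ramp[OF I]] m] .
  then have "\<forall>\<^sub>F n in sequentially.
      outer_prob M {\<omega>\<in>space M. real m + 1 < supdist I (X n \<omega>) (\<lambda>_. 0)} < \<delta>"
  proof eventually_elim
    case (elim n)
    have "outer_prob M {\<omega>\<in>space M. real m + 1 < supdist I (X n \<omega>) (\<lambda>_. 0)}
        \<le> outer_exp M (\<lambda>\<omega>. linf_ramp I (real m) (X n \<omega>))"
      by (rule outer_prob_le_outer_exp[OF assms(1)]) (auto simp: linf_ramp_def)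
    then show ?case using elim by linarith
  qed
  then show ?thesis by blast
qed

section \<open>Order statistics and the quantile transform\<close>

lemma ostat_in_image:
  assumes "1 \<le> m" "m \<le> n"
  shows "ostat n u m \<in> u ` {1..n}"
proof -
  have "sort (map u [1..<n+1]) ! (m - 1) \<in> set (sort (map u [1..<n+1]))"
    using assms by (intro nth_mem) simp
  then show ?thesis unfolding ostat_def by auto
qed

lemma ostat_mono: "1 \<le> m \<Longrightarrow> m \<le> m' \<Longrightarrow> m' \<le> n \<Longrightarrow> ostat n u m \<le> ostat n u m'"
  unfolding ostat_def by (rule sorted_nth_mono[OF sorted_sort]) auto

lemma ostat_le_if_count_gt:
  fixes u :: "nat \<Rightarrow> real"
  assumes k: "k + 1 \<le> n" and cnt: "real k < (\<Sum>i=1..n. indicator {..t} (u i))"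
  shows "ostat n u (k + 1) \<le> t"
proof (rule ccontr)
  assume gt: "\<not> ostat n u (k + 1) \<le> t"
  define g where "g x = (indicator {..t} x :: real)" for x
  define ys where "ys = sort (map u [1..<n+1])"
  have "{1..n} = set [1..<n+1]" by auto
  then have "(\<Sum>i=1..n. g (u i)) = sum_list (map g (map u [1..<n+1]))"
    by (simp only: sum_set_upt_conv_sum_list_nat map_map o_def)
  also have "\<dots> = sum_list (map g ys)"
    unfolding ys_def by (metis mset_map mset_sort sum_mset_sum_list)
  also have "\<dots> = (\<Sum>j<n. g (ys ! j))"
  proof -
    have "length ys = n" unfolding ys_def by simp
    then show ?thesis by (simp add: sum_list_sum_nth atLeast0LessThan)
  qed
  also have "\<dots> = (\<Sum>j<k. g (ys ! j)) + (\<Sum>j\<in>{k..<n}. g (ys ! j))"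
    using k by (metis sum.atLeastLessThan_concat atLeast0LessThan le0 add_leD1)
  also have "(\<Sum>j\<in>{k..<n}. g (ys ! j)) = 0"
  proof (intro sum.neutral ballI)
    fix j assume j: "j \<in> {k..<n}"
    have "ys ! k \<le> ys ! j" unfolding ys_def using j by (intro sorted_nth_mono[OF sorted_sort]) auto
    moreover have "t < ys ! k" using gt unfolding ostat_def ys_def by simp
    ultimately show "g (ys ! j) = 0" unfolding g_def by auto
  qed
  also have "(\<Sum>j<k. g (ys ! j)) \<le> (\<Sum>j<k. 1)" by (intro sum_mono) (auto simp: g_def indicator_def)
  finally show False using cnt unfolding g_def by simp
qed

lemma ostat_comp_antimono:
  fixes u :: "nat \<Rightarrow> real" and \<phi> :: "real \<Rightarrow> real"
  assumes anti: "\<And>x y. x \<in> u ` {1..n} \<Longrightarrow> y \<in> u ` {1..n} \<Longrightarrow> x \<le> y \<Longrightarrow> \<phi> y \<le> \<phi> x"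
    and m: "1 \<le> m" "m \<le> n"
  shows "ostat n (\<lambda>i. \<phi> (u i)) m = \<phi> (ostat n u (n + 1 - m))"
proof -
  define ys where "ys = sort (map u [1..<n+1])"
  have len: "length ys = n" unfolding ys_def by simp
  have sety: "set ys = u ` {1..n}" unfolding ys_def by auto
  have "sort (map (\<lambda>i. \<phi> (u i)) [1..<n+1]) = map \<phi> (rev ys)"
  proof (rule properties_for_sort)
    show "mset (map \<phi> (rev ys)) = mset (map (\<lambda>i. \<phi> (u i)) [1..<n+1])"
      unfolding ys_def by (simp only: mset_map mset_rev mset_sort multiset.map_comp o_def)
    show "sorted (map \<phi> (rev ys))"
    proof (rule sorted_iff_nth_mono[THEN iffD2], intro allI impI)
      fix i j assume "i \<le> j" "j < length (map \<phi> (rev ys))"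
      then have ij: "i \<le> j" "j < n" by (auto simp: len)
      have "ys ! (n - Suc j) \<le> ys ! (n - Suc i)"
        unfolding ys_def using ij by (intro sorted_nth_mono[OF sorted_sort]) auto
      moreover have "ys ! (n - Suc j) \<in> u ` {1..n}" "ys ! (n - Suc i) \<in> u ` {1..n}"
        using ij unfolding sety[symmetric] by (auto intro!: nth_mem simp: len)
      ultimately have "\<phi> (ys ! (n - Suc i)) \<le> \<phi> (ys ! (n - Suc j))" using anti by blast
      then show "map \<phi> (rev ys) ! i \<le> map \<phi> (rev ys) ! j" using ij by (simp add: rev_nth len)
    qed
  qed
  then have "ostat n (\<lambda>i. \<phi> (u i)) m = \<phi> (ys ! (n - m))"
    unfolding ostat_def using m len by (simp add: rev_nth Suc_diff_le)
  then show ?thesis unfolding ostat_def ys_def using m by simp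
qed

text \<open>The hypothesis \<open>G 0 = 0\<close> (the paper's \<open>X > 1\<close>) makes the sets in the infimum bounded below.\<close>
lemma mono_on_Ginv:
  fixes G :: "real \<Rightarrow> real"
  assumes mono: "mono G" and top: "(G \<longlongrightarrow> 1) at_top" and G0: "G 0 = 0"
  shows "mono_on {0<..<1} (Ginv G)"
proof (rule mono_onI)
  fix v v' :: real assume "v \<in> {0<..<1}" "v' \<in> {0<..<1}" "v \<le> v'"
  then have v: "0 < v" "v \<le> v'" "v' < 1" by auto
  show "Ginv G v \<le> Ginv G v'"
    unfolding Ginv_def
  proof (rule cInf_superset_mono)
    obtain N where "\<And>y. N \<le> y \<Longrightarrow> v' < G y"
      using order_tendstoD(1)[OF top v(3)] by (auto simp: eventually_at_top_linorder)
    then show "{x. v' \<le> G x} \<noteq> {}" by (metis less_imp_le mem_Collect_eq empty_iff order_refl)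
    show "bdd_below {x. v \<le> G x}"
    proof (rule bdd_belowI[where m=0])
      fix x assume x: "x \<in> {x. v \<le> G x}"
      show "0 \<le> x"
      proof (rule ccontr)
        assume "\<not> 0 \<le> x"
        then have "G x \<le> G 0" using mono by (simp add: monoD)
        then show False using x G0 v by simp
      qed
    qed
    show "{x. v' \<le> G x} \<subseteq> {x. v \<le> G x}" using v by auto
  qed
qed

lemma Tn_quantile_eq:
  fixes u :: "nat \<Rightarrow> real" and G :: "real \<Rightarrow> real"
  assumes u: "\<And>i. i \<in> {1..n} \<Longrightarrow> u i \<in> {0<..<1}" and kn: "k + 1 \<le> n"
    and G: "mono_on {0<..<1} (Ginv G)"
  shows "Tn k n (\<lambda>i. exp (Ginv G (1 - u i))) f =
     (\<Sum>j=1..k. f j * (Ginv G (1 - ostat n u j) - Ginv G (1 - ostat n u (Suc j))))"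
proof -
  define \<phi> where "\<phi> x = exp (Ginv G (1 - x))" for x
  have anti: "\<And>x y. x \<in> u ` {1..n} \<Longrightarrow> y \<in> u ` {1..n} \<Longrightarrow> x \<le> y \<Longrightarrow> \<phi> y \<le> \<phi> x"
    unfolding \<phi>_def using u by (auto intro!: mono_onD[OF G])
  note reflect = ostat_comp_antimono[where u=u and n=n and \<phi>=\<phi>, OF anti]
  show ?thesis unfolding Tn_def \<phi>_def[symmetric]
  proof (intro sum.cong refl)
    fix j assume j: "j \<in> {1..k}"
    have "ostat n (\<lambda>i. \<phi> (u i)) (n - j + 1) = \<phi> (ostat n u j)"
      using reflect[where m="n - j + 1"] j kn by auto
    moreover have "ostat n (\<lambda>i. \<phi> (u i)) (n - j) = \<phi> (ostat n u (Suc j))"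
      using reflect[where m="n - j"] j kn by (auto simp: Suc_diff_le)
    ultimately show "f j * (ln (ostat n (\<lambda>i. \<phi> (u i)) (n - j + 1)) - ln (ostat n (\<lambda>i. \<phi> (u i)) (n - j))) =
          f j * (Ginv G (1 - ostat n u j) - Ginv G (1 - ostat n u (Suc j)))"
      unfolding \<phi>_def by simp
  qed
qed

lemma Vn_ostat_eq:
  assumes "k + 1 \<le> n"
  shows "Vn k n u f = (\<Sum>j=1..k. f j * ln (ostat n u (Suc j) / ostat n u j))"
  unfolding Vn_def Uos_def using assms by (intro sum.cong refl) auto

section \<open>Good samples\<close>

text \<open>The event on which the deterministic estimates apply; by \<open>ostat_le_if_count_gt\<close> the count
  condition says that the \<open>(k+1)\<close>-th smallest \<open>u i\<close> is at most \<open>t\<close>.\<close>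
definition good_sample :: "nat \<Rightarrow> nat \<Rightarrow> real \<Rightarrow> real \<Rightarrow> (nat \<Rightarrow> real) \<Rightarrow> bool" where
  "good_sample n k t a u \<longleftrightarrow>
     (\<forall>i\<in>{1..n}. a \<le> u i \<and> u i < 1) \<and> real k < (\<Sum>i=1..n. indicator {..t} (u i))"

lemma good_sample_ostat:
  assumes good: "good_sample n k t a u" and kn: "k + 1 \<le> n" and j: "j \<in> {1..k}"
  shows "a \<le> ostat n u j" "ostat n u j \<le> ostat n u (Suc j)" "ostat n u (Suc j) \<le> t"
proof -
  have range: "\<forall>i\<in>{1..n}. a \<le> u i" and cnt: "real k < (\<Sum>i=1..n. indicator {..t} (u i))"
    using good unfolding good_sample_def by auto
  show "a \<le> ostat n u j" using ostat_in_image[of j n u] range j kn by auto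
  show "ostat n u j \<le> ostat n u (Suc j)" using j kn by (intro ostat_mono) auto
  show "ostat n u (Suc j) \<le> t"
    using ostat_mono[of "Suc j" "k + 1" n u] ostat_le_if_count_gt[OF kn cnt] j kn by auto
qed

lemma good_sample_in_unit:
  assumes "good_sample n k t a u" "0 < a" "i \<in> {1..n}"
  shows "u i \<in> {0<..<1}"
  using assms unfolding good_sample_def by force

locale uniform_sample = prob_space M for M :: "'a measure" +
  fixes U :: "nat \<Rightarrow> 'a \<Rightarrow> real"
  assumes indep: "indep_vars (\<lambda>_. borel) U {1..}"
    and uniform: "\<forall>i\<ge>1. distr M borel (U i) = uniform_measure lborel {0<..<1}"
begin

lemma U_measurable[measurable]: "1 \<le> i \<Longrightarrow> U i \<in> borel_measurable M"
  using indep unfolding indep_vars_def by auto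

lemma prob_U_vimage:
  assumes i: "1 \<le> i" and A: "A \<in> sets borel"
  shows "prob (U i -` A \<inter> space M) = measure lborel (A \<inter> {0<..<1})"
proof -
  have "prob (U i -` A \<inter> space M) = measure (distr M borel (U i)) A"
    using i A by (simp add: measure_distr)
  also have "\<dots> = measure (uniform_measure lborel {0<..<1}) A" using uniform i by simp
  finally show ?thesis using A by (simp add: measure_def Int_commute divide_ennreal_def)
qed

lemma prob_U_le:
  assumes i: "1 \<le> i" and t: "0 \<le> t" "t \<le> 1"
  shows "prob {\<omega>\<in>space M. U i \<omega> \<le> t} = t"
proof -
  have "{\<omega>\<in>space M. U i \<omega> \<le> t} = U i -` {..t} \<inter> space M" by auto
  moreover have "{..t} \<inter> {0<..<1} = {0<..t} \<or> {..t} \<inter> {0<..<1} = {0<..<1} \<and> t = 1" using t by auto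
  ultimately show ?thesis using prob_U_vimage[OF i, of "{..t}"] t by auto
qed

lemma prob_U_outside:
  assumes i: "1 \<le> i" and a: "0 \<le> a" "a \<le> 1"
  shows "prob {\<omega>\<in>space M. U i \<omega> \<notin> {a..<1}} = a"
proof -
  have "{\<omega>\<in>space M. U i \<omega> \<notin> {a..<1}} = U i -` (- {a..<1}) \<inter> space M" by auto
  moreover have "- {a..<1} \<inter> {0<..<1} = {0<..<a}" using a by auto
  ultimately show ?thesis using prob_U_vimage[OF i, of "- {a..<1}"] a by auto
qed

lemma prob_exists_U_outside:
  assumes a: "0 \<le> a" "a \<le> 1"
  shows "prob {\<omega>\<in>space M. \<exists>i\<in>{1..n}. U i \<omega> \<notin> {a..<1}} \<le> real n * a"
proof -
  have "{\<omega>\<in>space M. \<exists>i\<in>{1..n}. U i \<omega> \<notin> {a..<1}} = (\<Union>i\<in>{1..n}. {\<omega>\<in>space M. U i \<omega> \<notin> {a..<1}})"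
    by auto
  also have "prob \<dots> \<le> (\<Sum>i\<in>{1..n}. prob {\<omega>\<in>space M. U i \<omega> \<notin> {a..<1}})"
    by (rule measure_UNION_le) auto
  also have "\<dots> = (\<Sum>i\<in>{1..n}. a)" using prob_U_outside a by (intro sum.cong) auto
  finally show ?thesis by simp
qed

lemma expectation_indicator_cov:
  assumes i: "1 \<le> i" and j: "1 \<le> j" and t: "0 \<le> t" "t \<le> 1"
  shows "expectation (\<lambda>\<omega>. (indicator {..t} (U i \<omega>) - t) * (indicator {..t} (U j \<omega>) - t)) =
    (if i = j then t - t\<^sup>2 else 0)"
proof -
  define A where "A l = {\<omega>\<in>space M. U l \<omega> \<le> t}" for l
  have As: "A i \<in> events" "A j \<in> events" unfolding A_def using i j by auto
  have ind: "indicator {..t} (U l \<omega>) = (indicator (A l) \<omega> :: real)" if "\<omega> \<in> space M" for l \<omega>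
    using that by (simp add: A_def indicator_def)
  have prod: "(indicator (A i) \<omega> - t) * (indicator (A j) \<omega> - t) =
     indicator (A i \<inter> A j) \<omega> - t * indicator (A i) \<omega> - t * indicator (A j) \<omega> + t\<^sup>2" for \<omega>
    by (auto simp: indicator_def power2_eq_square algebra_simps)
  have "prob (A i \<inter> A j) = (if i = j then t else t * t)"
  proof (cases "i = j")
    case False
    have vim: "U l -` {..t} \<inter> space M = A l" for l by (auto simp: A_def)
    have "prob (\<Inter>l\<in>{i,j}. U l -` {..t} \<inter> space M) = (\<Prod>l\<in>{i,j}. prob (U l -` {..t} \<inter> space M))"
      by (rule indep_varsD[OF indep]) (use i j in auto)
    then have "prob (A i \<inter> A j) = prob (A i) * prob (A j)" unfolding vim using False by simp
    then show ?thesis using False prob_U_le[OF i t] prob_U_le[OF j t] by (simp add: A_def)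
  qed (use prob_U_le[OF i t] in \<open>simp add: A_def\<close>)
  moreover have "expectation (\<lambda>\<omega>. (indicator (A i) \<omega> - t) * (indicator (A j) \<omega> - t)) =
        prob (A i \<inter> A j) - t * prob (A i) - t * prob (A j) + t\<^sup>2"
    unfolding prod using As
    by (simp add: integral_add integral_diff prob_space integrable_real_indicator less_top[symmetric])
  ultimately have "expectation (\<lambda>\<omega>. (indicator (A i) \<omega> - t) * (indicator (A j) \<omega> - t)) =
      (if i = j then t - t\<^sup>2 else 0)"
    using prob_U_le[OF i t] prob_U_le[OF j t] by (auto simp: A_def power2_eq_square)
  moreover have "expectation (\<lambda>\<omega>. (indicator {..t} (U i \<omega>) - t) * (indicator {..t} (U j \<omega>) - t)) =
      expectation (\<lambda>\<omega>. (indicator (A i) \<omega> - t) * (indicator (A j) \<omega> - t))"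
    by (intro Bochner_Integration.integral_cong) (auto simp: ind)
  ultimately show ?thesis by simp
qed

lemma expectation_count_centered_sq:
  assumes t: "0 \<le> t" "t \<le> 1"
  shows "expectation (\<lambda>\<omega>. ((\<Sum>i=1..n. indicator {..t} (U i \<omega>)) - real n * t)\<^sup>2) = real n * (t - t\<^sup>2)"
proof -
  define Y where "Y i \<omega> = (indicator {..t} (U i \<omega>) :: real) - t" for i \<omega>
  have Y_int: "integrable M (\<lambda>\<omega>. Y i \<omega> * Y j \<omega>)" if "i \<in> {1..n}" "j \<in> {1..n}" for i j
  proof (intro integrable_const_bound[where B=1] AE_I2)
    fix \<omega> show "norm (Y i \<omega> * Y j \<omega>) \<le> 1"
      using t unfolding Y_def by (auto simp: indicator_def abs_mult mult_le_one)
  qed (use that in \<open>simp add: Y_def\<close>)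
  have sq: "((\<Sum>i=1..n. indicator {..t} (U i \<omega>)) - real n * t)\<^sup>2 = (\<Sum>i=1..n. \<Sum>j=1..n. Y i \<omega> * Y j \<omega>)" for \<omega>
  proof -
    have "(\<Sum>i=1..n. indicator {..t} (U i \<omega>)) - real n * t = (\<Sum>i=1..n. Y i \<omega>)"
      unfolding Y_def by (simp add: sum_subtractf)
    then show ?thesis by (simp add: power2_eq_square sum_product)
  qed
  have "expectation (\<lambda>\<omega>. ((\<Sum>i=1..n. indicator {..t} (U i \<omega>)) - real n * t)\<^sup>2) =
      (\<Sum>i=1..n. expectation (\<lambda>\<omega>. \<Sum>j=1..n. Y i \<omega> * Y j \<omega>))"
    unfolding sq by (rule Bochner_Integration.integral_sum) (auto intro!: Y_int)
  also have "\<dots> = (\<Sum>i=1..n. \<Sum>j=1..n. expectation (\<lambda>\<omega>. Y i \<omega> * Y j \<omega>))"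
    using Y_int by (intro sum.cong refl Bochner_Integration.integral_sum) auto
  also have "\<dots> = (\<Sum>i=1..n. \<Sum>j=1..n. if i = j then t - t\<^sup>2 else 0)"
    unfolding Y_def using t by (intro sum.cong refl expectation_indicator_cov) auto
  finally show ?thesis by simp
qed

lemma prob_count_le:
  assumes t: "0 < t" "t < 1" and kt: "real k < real n * t"
  shows "prob {\<omega>\<in>space M. (\<Sum>i=1..n. indicator {..t} (U i \<omega>)) \<le> real k}
           \<le> real n * t / (real n * t - real k)\<^sup>2"
proof -
  define S where "S \<omega> = (\<Sum>i=1..n. indicator {..t} (U i \<omega>) :: real)" for \<omega>
  have S_bounds: "0 \<le> S \<omega>" "S \<omega> \<le> real n" for \<omega>
    unfolding S_def using sum_mono[of "{1..n}" "\<lambda>i. indicator {..t} (U i \<omega>) :: real" "\<lambda>_. 1"]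
    by (auto simp: indicator_def intro: sum_nonneg)
  have "integrable M (\<lambda>\<omega>. (S \<omega> - real n * t)\<^sup>2)"
  proof (intro integrable_const_bound[where B="(real n + real n * t)\<^sup>2"] AE_I2)
    fix \<omega>
    have "0 \<le> real n * t" using t by simp
    then have "\<bar>S \<omega> - real n * t\<bar> \<le> real n + real n * t"
      using S_bounds[of \<omega>] unfolding abs_le_iff by linarith
    then show "norm ((S \<omega> - real n * t)\<^sup>2) \<le> (real n + real n * t)\<^sup>2"
      by (metis abs_ge_zero power2_abs power_mono real_norm_def zero_le_power2 abs_of_nonneg)
  qed (simp add: S_def)
  moreover have "{\<omega>\<in>space M. S \<omega> \<le> real k} \<subseteq> {\<omega>\<in>space M. (real n * t - real k)\<^sup>2 \<le> (S \<omega> - real n * t)\<^sup>2}"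
  proof safe
    fix \<omega> assume "S \<omega> \<le> real k"
    then have "(real n * t - real k)\<^sup>2 \<le> (real n * t - S \<omega>)\<^sup>2" using kt by (intro power_mono) auto
    then show "(real n * t - real k)\<^sup>2 \<le> (S \<omega> - real n * t)\<^sup>2" by (simp add: power2_commute)
  qed
  then have "prob {\<omega>\<in>space M. S \<omega> \<le> real k}
      \<le> prob {\<omega>\<in>space M. (real n * t - real k)\<^sup>2 \<le> (S \<omega> - real n * t)\<^sup>2}"
    by (intro finite_measure_mono) (simp_all add: S_def)
  ultimately have "prob {\<omega>\<in>space M. S \<omega> \<le> real k}
      \<le> expectation (\<lambda>\<omega>. (S \<omega> - real n * t)\<^sup>2) / (real n * t - real k)\<^sup>2"
    using kt by (intro order_trans[OF _ integral_Markov_inequality_measure[where A="space M"]])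
      (auto simp: S_def)
  also have "\<dots> \<le> real n * t / (real n * t - real k)\<^sup>2"
    unfolding S_def expectation_count_centered_sq[OF less_imp_le[OF t(1)] less_imp_le[OF t(2)]]
    using t kt by (intro divide_right_mono) (auto simp: algebra_simps)
  finally show ?thesis unfolding S_def .
qed

lemma prob_not_good_sample_le:
  assumes t: "0 < t" "t < 1" and kt: "real k < real n * t" and a: "0 \<le> a" "a \<le> 1"
  shows "prob {\<omega>\<in>space M. \<not> good_sample n k t a (\<lambda>i. U i \<omega>)}
    \<le> real n * a + real n * t / (real n * t - real k)\<^sup>2"
proof -
  have "{\<omega>\<in>space M. \<not> good_sample n k t a (\<lambda>i. U i \<omega>)} \<subseteq>
      {\<omega>\<in>space M. \<exists>i\<in>{1..n}. U i \<omega> \<notin> {a..<1}} \<union>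
      {\<omega>\<in>space M. (\<Sum>i=1..n. indicator {..t} (U i \<omega>)) \<le> real k}"
    unfolding good_sample_def by auto
  then have "prob {\<omega>\<in>space M. \<not> good_sample n k t a (\<lambda>i. U i \<omega>)} \<le>
      prob {\<omega>\<in>space M. \<exists>i\<in>{1..n}. U i \<omega> \<notin> {a..<1}} +
      prob {\<omega>\<in>space M. (\<Sum>i=1..n. indicator {..t} (U i \<omega>)) \<le> real k}"
    by (intro order_trans[OF finite_measure_mono measure_Un_le]) auto
  then show ?thesis using prob_exists_U_outside[OF a, of n] prob_count_le[OF t kt] by linarith
qed

text \<open>The count of the \<open>U i \<le> \<lambda> k/n\<close> has mean \<open>\<lambda>k\<close> and variance at most \<open>\<lambda>k\<close>, so it is at most \<open>k\<close>
  with probability \<open>\<le> \<lambda>/((\<lambda>-1)\<^sup>2 k)\<close>; some \<open>U i\<close> falls below \<open>exp (-K) / n\<close> with probability \<open>\<le> exp (-K)\<close>.\<close>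
lemma eventually_prob_not_good_sample:
  fixes k :: "nat \<Rightarrow> nat"
  assumes k_inf: "filterlim k at_top sequentially" and k_small: "(\<lambda>n. real (k n) / real n) \<longlonglongrightarrow> 0"
    and lam: "1 < lam" and K: "0 \<le> K" "exp (- K) < \<delta> / 2"
  shows "\<forall>\<^sub>F n in sequentially.
    prob {\<omega>\<in>space M. \<not> good_sample n (k n) (lam * real (k n) / real n) (exp (- K) / real n) (\<lambda>i. U i \<omega>)} < \<delta>"
proof -
  have \<delta>: "0 < \<delta>" using K(2) exp_gt_zero[of "- K"] by linarith
  have "filterlim (\<lambda>n. real (k n)) at_top sequentially"
    using filterlim_compose[OF filterlim_real_sequentially k_inf] by simp
  then have "\<forall>\<^sub>F n in sequentially. lam / ((lam - 1)\<^sup>2 * (\<delta> / 2)) < real (k n)"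
    unfolding filterlim_at_top_dense by blast
  moreover have "\<forall>\<^sub>F n in sequentially. real (k n) / real n < 1 / lam"
    using order_tendstoD(2)[OF k_small] lam by simp
  moreover have "\<forall>\<^sub>F n in sequentially. 1 \<le> n" by (rule eventually_ge_at_top)
  ultimately show ?thesis
  proof eventually_elim
    case (elim n)
    have n: "0 < real n" using elim by simp
    have "0 < lam / ((lam - 1)\<^sup>2 * (\<delta> / 2))" using lam \<delta> by simp
    then have kpos: "0 < real (k n)" using elim(1) by linarith
    have t: "0 < lam * real (k n) / real n" "lam * real (k n) / real n < 1"
      using elim(2) lam n kpos by (auto simp: field_simps)
    have "exp (- K) \<le> 1" "1 \<le> real n" using K(1) elim(3) by simp_all
    then have "exp (- K) \<le> real n" by linarith
    then have a: "0 \<le> exp (- K) / real n" "exp (- K) / real n \<le> 1" using n by (auto simp: field_simps)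
    have kt: "real (k n) < real n * (lam * real (k n) / real n)" using n lam kpos by simp
    have "(lam * real (k n) - real (k n))\<^sup>2 = ((lam - 1)\<^sup>2 * real (k n)) * real (k n)"
      by (simp add: power2_eq_square algebra_simps)
    then have "lam * real (k n) / (lam * real (k n) - real (k n))\<^sup>2 = lam / ((lam - 1)\<^sup>2 * real (k n))"
      using kpos by simp
    also have "\<dots> < \<delta> / 2" using elim(1) lam kpos \<delta> by (simp add: divide_less_eq field_simps)
    finally have "lam * real (k n) / (lam * real (k n) - real (k n))\<^sup>2 < \<delta> / 2" .
    moreover have "prob {\<omega>\<in>space M. \<not> good_sample n (k n) (lam * real (k n) / real n) (exp (- K) / real n) (\<lambda>i. U i \<omega>)}
        \<le> exp (- K) + lam * real (k n) / (lam * real (k n) - real (k n))\<^sup>2"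
      using prob_not_good_sample_le[OF t kt a] n by simp
    ultimately show ?case using K(2) by linarith
  qed
qed

lemma sets_not_good_sample[measurable]:
  "{\<omega>\<in>space M. \<not> good_sample n k t a (\<lambda>i. U i \<omega>)} \<in> events"
  unfolding good_sample_def by measurable

lemma conv_outer_prob_if_small_on_good_samples:
  fixes Z :: "nat \<Rightarrow> (nat \<Rightarrow> real) \<Rightarrow> ereal" and k :: "nat \<Rightarrow> nat"
  assumes weak: "weak_conv_linf M Fa (Vproc Fa k U)" and Fa: "Fa \<noteq> {}"
    and k_inf: "filterlim k at_top sequentially" and k_small: "(\<lambda>n. real (k n) / real n) \<longlonglongrightarrow> 0"
    and lam: "1 < lam"
    and small: "\<And>e B K. 0 < e \<Longrightarrow> 0 \<le> B \<Longrightarrow> 0 \<le> K \<Longrightarrow> \<forall>\<^sub>F n in sequentially. \<forall>u.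
      good_sample n (k n) (lam * real (k n) / real n) (exp (- K) / real n) u \<and>
      (\<forall>f\<in>Fa. \<bar>Vstar (k n) n u f\<bar> \<le> B) \<longrightarrow> Z n u \<le> ereal e"
  shows "conv_outer_prob M (\<lambda>n \<omega>. Z n (\<lambda>i. U i \<omega>))"
proof (rule conv_outer_probI)
  fix e \<delta> :: real assume e: "0 < e" and \<delta>: "0 < \<delta>"
  obtain m where m: "\<forall>\<^sub>F n in sequentially.
      outer_prob M {\<omega>\<in>space M. m < supdist Fa (Vproc Fa k U n \<omega>) (\<lambda>_. 0)} < \<delta>"
    using weak_conv_linf_tight[OF prob_space_axioms Fa weak \<delta>] by blast
  define K where "K = max 0 (ln (2 / \<delta>) + 1)"
  have K: "0 \<le> K" "exp (- K) < \<delta> / 2"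
  proof -
    have "exp (- K) \<le> exp (- (ln (2 / \<delta>) + 1))" unfolding K_def by simp
    also have "\<dots> < exp (- ln (2 / \<delta>))" by simp
    finally show "exp (- K) < \<delta> / 2" using \<delta> by (simp add: exp_minus)
  qed (simp add: K_def)
  have B: "0 \<le> max 0 m" by simp
  have linf: "\<forall>\<^sub>F n in sequentially. \<forall>\<omega>\<in>space M. Vproc Fa k U n \<omega> \<in> linf Fa"
    using weak unfolding weak_conv_linf_def by blast
  show "\<forall>\<^sub>F n in sequentially. \<exists>B S. B \<in> sets M \<and> measure M B < \<delta> \<and> S \<subseteq> space M \<and>
      outer_prob M S < \<delta> \<and> {\<omega>\<in>space M. ereal e < Z n (\<lambda>i. U i \<omega>)} \<subseteq> B \<union> S"
    using eventually_prob_not_good_sample[OF k_inf k_small lam K] m small[OF e B K(1)] linf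
  proof eventually_elim
    case (elim n)
    let ?S = "{\<omega>\<in>space M. m < supdist Fa (Vproc Fa k U n \<omega>) (\<lambda>_. 0)}"
    have "{\<omega>\<in>space M. ereal e < Z n (\<lambda>i. U i \<omega>)} \<subseteq>
        {\<omega>\<in>space M. \<not> good_sample n (k n) (lam * real (k n) / real n) (exp (- K) / real n) (\<lambda>i. U i \<omega>)} \<union> ?S"
    proof safe
      fix \<omega> assume \<omega>: "\<omega> \<in> space M" "ereal e < Z n (\<lambda>i. U i \<omega>)" "\<not> m < supdist Fa (Vproc Fa k U n \<omega>) (\<lambda>_. 0)"
      have V: "Vproc Fa k U n \<omega> \<in> linf Fa" using elim(4) \<omega>(1) by blast
      have "\<bar>Vstar (k n) n (\<lambda>i. U i \<omega>) f\<bar> \<le> max 0 m" if f: "f \<in> Fa" for f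
        using abs_diff_le_supdist[OF V zero_in_linf f] \<omega>(3) f unfolding Vproc_def by simp
      then show "good_sample n (k n) (lam * real (k n) / real n) (exp (- K) / real n) (\<lambda>i. U i \<omega>) \<Longrightarrow> False"
        using elim(3) \<omega>(2) by (auto dest: not_le_imp_less)
    qed
    then show ?case using elim(1,2) by (intro exI conjI) auto
  qed
qed

end

section \<open>Analytic estimates\<close>

lemma abs_ln_one_plus_le:
  fixes x :: real
  assumes x: "\<bar>x\<bar> \<le> 1/2"
  shows "\<bar>ln (1 + x)\<bar> \<le> 2 * \<bar>x\<bar>"
proof -
  have "\<bar>ln (1 + x) - x\<bar> \<le> 2 * x\<^sup>2" by (rule abs_ln_one_plus_x_minus_x_bound[OF x])
  moreover have "2 * x\<^sup>2 \<le> \<bar>x\<bar>"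
    using mult_right_mono[of "2 * \<bar>x\<bar>" 1 "\<bar>x\<bar>"] x by (simp add: power2_eq_square)
  ultimately show ?thesis by linarith
qed

lemma has_integral_inverse:
  fixes a v :: real
  assumes "0 < a" "a \<le> v"
  shows "((\<lambda>t. 1 / t) has_integral (ln v - ln a)) {a..v}"
proof -
  have "\<And>x. x \<in> {a..v} \<Longrightarrow> (ln has_vector_derivative (1 / x)) (at x within {a..v})"
    using assms by (auto intro!: derivative_eq_intros
        simp: has_real_derivative_iff_has_vector_derivative[symmetric] has_field_derivative_at_within)
  from fundamental_theorem_of_calculus[OF assms(2) this] show ?thesis by simp
qed

lemma abs_integral_divide_dev_le:
  fixes h :: "real \<Rightarrow> real"
  assumes a: "0 < a" "a \<le> v" and hi: "(\<lambda>t. h t / t) integrable_on {a..v}"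
    and bd: "\<And>x. x \<in> {a..v} \<Longrightarrow> \<bar>h x - C\<bar> \<le> e"
  shows "\<bar>integral {a..v} (\<lambda>t. h t / t) - C * (ln v - ln a)\<bar> \<le> e * (ln v - ln a)"
proof -
  have i1: "((\<lambda>t. C * (1 / t)) has_integral C * (ln v - ln a)) {a..v}"
    and i2: "((\<lambda>t. e * (1 / t)) has_integral e * (ln v - ln a)) {a..v}"
    by (intro has_integral_mult_right has_integral_inverse[OF a])+
  have "integral {a..v} (\<lambda>t. h t / t) - C * (ln v - ln a) = integral {a..v} (\<lambda>t. h t / t - C * (1 / t))"
    using hi i1 by (simp add: integral_diff has_integral_integrable integral_unique)
  also have "\<bar>\<dots>\<bar> \<le> integral {a..v} (\<lambda>t. e * (1 / t))"
    unfolding real_norm_def[symmetric]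
  proof (rule integral_norm_bound_integral)
    show "(\<lambda>t. h t / t - C * (1 / t)) integrable_on {a..v}"
      using hi i1 by (intro integrable_diff) (auto intro: has_integral_integrable)
    show "(\<lambda>t. e * (1 / t)) integrable_on {a..v}" using i2 by (rule has_integral_integrable)
    fix x assume x: "x \<in> {a..v}"
    then have "0 < x" using a by auto
    then have "\<bar>h x / x - C * (1 / x)\<bar> = \<bar>h x - C\<bar> / x" by (simp add: field_simps abs_div)
    also have "\<dots> \<le> e / x" using bd[OF x] \<open>0 < x\<close> by (simp add: divide_right_mono)
    finally show "norm (h x / x - C * (1 / x)) \<le> e * (1 / x)" by simp
  qed
  also have "\<dots> = e * (ln v - ln a)" using i2 by (rule integral_unique)
  finally show ?thesis .
qed

lemma abs_integral_to_one_diff_dev_le: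
  fixes h :: "real \<Rightarrow> real"
  assumes a: "0 < a" "a \<le> v" "v \<le> 1" and hi: "(\<lambda>t. h t / t) integrable_on {a..1}"
    and bd: "\<And>x. x \<in> {a..v} \<Longrightarrow> \<bar>h x - C\<bar> \<le> e"
  shows "\<bar>integral {a..1} (\<lambda>t. h t / t) - integral {v..1} (\<lambda>t. h t / t) - C * (ln v - ln a)\<bar>
    \<le> e * (ln v - ln a)"
  using abs_integral_divide_dev_le[OF a(1,2) integrable_subinterval_real[OF hi] bd]
    Henstock_Kurzweil_Integration.integral_combine[OF a(2,3) hi] a by auto

lemma abs_sum_weighted_increments_le:
  fixes f Q L :: "nat \<Rightarrow> real"
  assumes f: "\<And>j. j \<in> {1..k} \<Longrightarrow> 0 \<le> f j"
    and step: "\<And>j. j \<in> {1..k} \<Longrightarrow> \<bar>Q j - c * L j\<bar> \<le> A + B * L j"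
  shows "\<bar>(\<Sum>j=1..k. f j * Q j) - c * (\<Sum>j=1..k. f j * L j)\<bar>
    \<le> A * (\<Sum>j=1..k. f j) + B * (\<Sum>j=1..k. f j * L j)"
proof -
  have "\<bar>(\<Sum>j=1..k. f j * Q j) - c * (\<Sum>j=1..k. f j * L j)\<bar> = \<bar>\<Sum>j=1..k. f j * (Q j - c * L j)\<bar>"
    by (simp add: sum_distrib_left sum_subtractf algebra_simps)
  also have "\<dots> \<le> (\<Sum>j=1..k. \<bar>f j * (Q j - c * L j)\<bar>)" by (rule sum_abs)
  also have "\<dots> \<le> (\<Sum>j=1..k. f j * (A + B * L j))"
    using f step by (intro sum_mono) (auto simp: abs_mult intro!: mult_left_mono)
  also have "\<dots> = A * (\<Sum>j=1..k. f j) + B * (\<Sum>j=1..k. f j * L j)"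
    by (simp add: sum_distrib_left sum.distrib algebra_simps)
  finally show ?thesis .
qed

lemma frechet_increment_dev_le:
  fixes p b Q :: "real \<Rightarrow> real"
  assumes rep: "\<forall>x\<in>{0<..<1}. (\<lambda>t. b t / t) integrable_on {x..1} \<and>
        Q x = ln c + ln (1 + p x) - \<gamma> * ln x + integral {x..1} (\<lambda>t. b t / t)"
    and av: "0 < a" "a \<le> v" "v \<le> t" "t < 1"
    and pb: "\<And>x. 0 < x \<Longrightarrow> x \<le> t \<Longrightarrow> \<bar>p x\<bar> \<le> r1 \<and> \<bar>b x\<bar> \<le> r2" and r1: "r1 \<le> 1/2"
  shows "\<bar>Q a - Q v - \<gamma> * ln (v / a)\<bar> \<le> 4 * r1 + r2 * ln (v / a)"
proof -
  have ra: "(\<lambda>t. b t / t) integrable_on {a..1}"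
      "Q a = ln c + ln (1 + p a) - \<gamma> * ln a + integral {a..1} (\<lambda>t. b t / t)"
    and rv: "Q v = ln c + ln (1 + p v) - \<gamma> * ln v + integral {v..1} (\<lambda>t. b t / t)"
    using rep av by auto
  have "\<bar>integral {a..1} (\<lambda>t. b t / t) - integral {v..1} (\<lambda>t. b t / t) - 0 * (ln v - ln a)\<bar>
      \<le> r2 * (ln v - ln a)"
    by (rule abs_integral_to_one_diff_dev_le[OF av(1,2) _ ra(1)]) (use av pb in auto)
  moreover have "\<bar>ln (1 + p a)\<bar> \<le> 2 * r1" "\<bar>ln (1 + p v)\<bar> \<le> 2 * r1"
    using abs_ln_one_plus_le[of "p a"] abs_ln_one_plus_le[of "p v"] pb[of a] pb[of v] r1 av by auto
  moreover have "Q a - Q v - \<gamma> * ln (v / a) = (ln (1 + p a) - ln (1 + p v)) +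
      (integral {a..1} (\<lambda>t. b t / t) - integral {v..1} (\<lambda>t. b t / t))"
    using av unfolding ra(2) rv by (simp add: ln_div algebra_simps)
  ultimately show ?thesis using av by (simp add: ln_div)
qed

lemma gumbel_increment_dev_le:
  fixes s Q :: "real \<Rightarrow> real"
  assumes rep: "\<forall>x\<in>{0<..<1}. (\<lambda>t. s t / t) integrable_on {x..1} \<and>
        Q x = d - s x + integral {x..1} (\<lambda>t. s t / t)"
    and av: "0 < a" "a \<le> v" "v < 1"
    and sb: "\<And>x. x \<in> {a..v} \<Longrightarrow> \<bar>s x - s0\<bar> \<le> e"
  shows "\<bar>Q a - Q v - s0 * ln (v / a)\<bar> \<le> 2 * e + e * ln (v / a)"
proof -
  have ra: "(\<lambda>t. s t / t) integrable_on {a..1}" "Q a = d - s a + integral {a..1} (\<lambda>t. s t / t)"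
    and rv: "Q v = d - s v + integral {v..1} (\<lambda>t. s t / t)"
    using rep av by auto
  have "\<bar>integral {a..1} (\<lambda>t. s t / t) - integral {v..1} (\<lambda>t. s t / t) - s0 * (ln v - ln a)\<bar>
      \<le> e * (ln v - ln a)"
    by (rule abs_integral_to_one_diff_dev_le[OF av(1,2) _ ra(1) sb]) (use av in auto)
  moreover have "\<bar>s a - s0\<bar> \<le> e" "\<bar>s v - s0\<bar> \<le> e" using sb av by auto
  moreover have "Q a - Q v - s0 * ln (v / a) = (s v - s a) +
      (integral {a..1} (\<lambda>t. s t / t) - integral {v..1} (\<lambda>t. s t / t) - s0 * (ln v - ln a))"
    using av unfolding ra(2) rv by (simp add: ln_div algebra_simps)
  ultimately show ?thesis using av by (simp add: ln_div)
qed

lemma sum_squares_le_square_sum: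
  fixes a :: "'a \<Rightarrow> real"
  assumes "\<forall>i\<in>A. 0 \<le> a i"
  shows "(\<Sum>i\<in>A. (a i)\<^sup>2) \<le> (\<Sum>i\<in>A. a i)\<^sup>2"
  using assms
proof (induction A rule: infinite_finite_induct)
  case (insert x F)
  have "0 \<le> (\<Sum>i\<in>F. a i)" using insert by (auto intro: sum_nonneg)
  then have "(a x)\<^sup>2 + (\<Sum>i\<in>F. a i)\<^sup>2 \<le> (a x + (\<Sum>i\<in>F. a i))\<^sup>2"
    using insert by (simp add: power2_eq_square algebra_simps)
  then show ?case using insert by simp
qed simp_all

lemma sigman_nonneg: "0 \<le> sigman k f"
  unfolding sigman_def by (auto intro!: sum_nonneg)

lemma
  assumes f: "\<And>j. j \<in> {1..k} \<Longrightarrow> 0 \<le> f j"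
  shows sigman_le_an: "sigman k f \<le> an k f"
    and an_le_sum: "an k f \<le> (\<Sum>j=1..k. f j)"
proof -
  have "(\<Sum>j=1..k. (f j)\<^sup>2 / (real j)\<^sup>2) \<le> (an k f)\<^sup>2"
    unfolding an_def power_divide[symmetric] by (rule sum_squares_le_square_sum) (use f in auto)
  moreover have "0 \<le> an k f" unfolding an_def using f by (auto intro!: sum_nonneg)
  ultimately show "sigman k f \<le> an k f" unfolding sigman_def by (rule real_le_lsqrt[rotated])
  show "an k f \<le> (\<Sum>j=1..k. f j)"
    unfolding an_def
  proof (intro sum_mono)
    fix j assume j: "j \<in> {1..k}"
    then have "f j / real j \<le> f j / 1" using f[OF j] by (intro divide_left_mono) auto
    then show "f j / real j \<le> f j" by simp
  qed
qed

lemma abs_exp_minus_one_le: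
  fixes x :: real
  assumes "\<bar>x\<bar> \<le> 1/2"
  shows "\<bar>exp x - 1\<bar> \<le> 2 * \<bar>x\<bar>"
proof (cases "0 \<le> x")
  case True
  then show ?thesis using exp_bound_lemma[of x] assms by simp
next
  case False
  then have "\<bar>exp x - 1\<bar> = 1 - exp x" by simp
  then show ?thesis using exp_ge_add_one_self[of x] False by linarith
qed

lemma abs_integral_to_one_diff_le:
  fixes b :: "real \<Rightarrow> real"
  assumes bi: "\<forall>u\<in>{0<..<1}. (\<lambda>t. b t / t) integrable_on {u..1}"
    and x: "0 < x" "x \<le> t" and y: "0 < y" "y \<le> t" and t: "t < 1"
    and b: "\<And>z. 0 < z \<Longrightarrow> z \<le> t \<Longrightarrow> \<bar>b z\<bar> \<le> r"
  shows "\<bar>integral {x..1} (\<lambda>t. b t / t) - integral {y..1} (\<lambda>t. b t / t)\<bar> \<le> r * \<bar>ln x - ln y\<bar>"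
proof -
  have *: "\<bar>integral {a..1} (\<lambda>t. b t / t) - integral {v..1} (\<lambda>t. b t / t)\<bar> \<le> r * (ln v - ln a)"
    if "0 < a" "a \<le> v" "v \<le> t" for a v
    using abs_integral_to_one_diff_dev_le[of a v b 0 r] that bi b t by auto
  show ?thesis
  proof (cases "x \<le> y")
    case True then show ?thesis using *[of x y] x y by simp
  next
    case False then show ?thesis using *[of y x] x y by (simp add: abs_minus_commute)
  qed
qed

text \<open>Slow variation of \<open>s\<close>: \<open>s x / s \<kappa> = (1 + p x) / (1 + p \<kappa>) \<cdot> exp (\<integral>\<^sub>x\<^sup>\<kappa> b t / t dt)\<close> is close to 1
  when \<open>p\<close> and \<open>b\<close> are small on \<open>(0, t]\<close>.\<close>
lemma gumbel_s_rel_dev_le: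
  fixes c :: real and p b :: "real \<Rightarrow> real"
  assumes c: "0 < c" and bi: "\<forall>u\<in>{0<..<1}. (\<lambda>t. b t / t) integrable_on {u..1}"
    and \<kappa>: "0 < \<kappa>" "\<kappa> \<le> t" and t: "t < 1" and x: "0 < x" "x \<le> t"
    and pb: "\<And>y. 0 < y \<Longrightarrow> y \<le> t \<Longrightarrow> \<bar>p y\<bar> \<le> r1 \<and> \<bar>b y\<bar> \<le> r2" and r1: "r1 \<le> 1/2"
    and D: "r2 * \<bar>ln x - ln \<kappa>\<bar> \<le> D" "D \<le> 1/2"
  shows "\<bar>gumbel_s c p b x - gumbel_s c p b \<kappa>\<bar> \<le> (6 * D + 4 * r1) * gumbel_s c p b \<kappa>"
    and "0 < gumbel_s c p b \<kappa>"
proof -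
  define I where "I y = integral {y..1} (\<lambda>t. b t / t)" for y
  define \<Delta> where "\<Delta> = I x - I \<kappa>"
  have "\<bar>\<Delta>\<bar> \<le> D"
    using abs_integral_to_one_diff_le[OF bi x \<kappa> t, of r2] pb D unfolding \<Delta>_def I_def by force
  then have e\<Delta>: "\<bar>exp \<Delta> - 1\<bar> \<le> 2 * D" using abs_exp_minus_one_le[of \<Delta>] D by simp
  have px: "\<bar>p x\<bar> \<le> r1" and pk: "\<bar>p \<kappa>\<bar> \<le> r1" and r2: "0 \<le> r2"
    using pb[OF x] pb[OF \<kappa>] by auto
  have "0 \<le> r2 * \<bar>ln x - ln \<kappa>\<bar>" using r2 by simp
  then have D0: "0 \<le> D" using D(1) by linarith
  define s0 where "s0 = c * exp (I \<kappa>)"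
  have s0: "0 < s0" unfolding s0_def using c by simp
  have sx: "gumbel_s c p b x = s0 * ((1 + p x) * exp \<Delta>)"
    and sk: "gumbel_s c p b \<kappa> = s0 * (1 + p \<kappa>)"
    unfolding gumbel_s_def I_def[symmetric] \<Delta>_def s0_def by (simp_all add: exp_diff)
  show "0 < gumbel_s c p b \<kappa>" unfolding sk using s0 pk r1 by auto
  have "\<bar>(1 + p x) * exp \<Delta> - (1 + p \<kappa>)\<bar> = \<bar>(1 + p x) * (exp \<Delta> - 1) + (p x - p \<kappa>)\<bar>"
    by (simp add: algebra_simps)
  also have "\<dots> \<le> \<bar>1 + p x\<bar> * \<bar>exp \<Delta> - 1\<bar> + (\<bar>p x\<bar> + \<bar>p \<kappa>\<bar>)"
    using abs_triangle_ineq[of "(1 + p x) * (exp \<Delta> - 1)" "p x - p \<kappa>"]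
      abs_triangle_ineq4[of "p x" "p \<kappa>"] by (simp add: abs_mult)
  also have "\<dots> \<le> 3/2 * (2 * D) + 2 * r1"
  proof -
    have "\<bar>1 + p x\<bar> \<le> 3/2" using px r1 by linarith
    then have "\<bar>1 + p x\<bar> * \<bar>exp \<Delta> - 1\<bar> \<le> 3/2 * (2 * D)" using e\<Delta> by (intro mult_mono) auto
    then show ?thesis using px pk by linarith
  qed
  also have "\<dots> \<le> (6 * D + 4 * r1) * (1 + p \<kappa>)"
  proof -
    have "1/2 \<le> 1 + p \<kappa>" "0 \<le> 6 * D + 4 * r1" using pk px r1 D0 by linarith+
    then have "(6 * D + 4 * r1) * (1/2) \<le> (6 * D + 4 * r1) * (1 + p \<kappa>)" by (rule mult_left_mono)
    then show ?thesis by simp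
  qed
  finally have dev: "\<bar>(1 + p x) * exp \<Delta> - (1 + p \<kappa>)\<bar> \<le> (6 * D + 4 * r1) * (1 + p \<kappa>)" .
  have "\<bar>gumbel_s c p b x - gumbel_s c p b \<kappa>\<bar> = s0 * \<bar>(1 + p x) * exp \<Delta> - (1 + p \<kappa>)\<bar>"
    unfolding sx sk using s0 by (simp add: right_diff_distrib[symmetric] abs_mult)
  also have "\<dots> \<le> s0 * ((6 * D + 4 * r1) * (1 + p \<kappa>))" using dev s0 by (intro mult_left_mono) auto
  finally show "\<bar>gumbel_s c p b x - gumbel_s c p b \<kappa>\<bar> \<le> (6 * D + 4 * r1) * gumbel_s c p b \<kappa>"
    unfolding sk by (simp add: ac_simps)
qed

lemma frechet_normalized_error_le:
  fixes T V a \<sigma> S \<gamma> r1 r2 \<eta> B :: real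
  assumes \<sigma>: "0 \<le> \<sigma>" "\<sigma> \<le> a" "a \<le> S" and TV: "\<bar>T - \<gamma> * V\<bar> \<le> 4 * r1 * S + r2 * V"
    and VB: "\<bar>(V - a) / \<sigma>\<bar> \<le> B" and r: "0 \<le> r1" "0 \<le> r2"
    and \<eta>: "0 < \<sigma> \<Longrightarrow> r1 * (S / \<sigma>) \<le> \<eta>" "0 < \<sigma> \<Longrightarrow> r2 * (S / \<sigma>) \<le> \<eta>"
    and pos: "0 \<le> \<eta>" "0 \<le> B"
  shows "\<bar>a / \<sigma> * (T / a - \<gamma>) - \<gamma> * ((V - a) / \<sigma>)\<bar> \<le> \<eta> * (5 + B)"
proof (cases "\<sigma> = 0")
  case True then show ?thesis using pos by simp
next
  case False
  then have sp: "0 < \<sigma>" "0 < a" using \<sigma> by auto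
  have S1: "1 \<le> S / \<sigma>" using sp \<sigma> by simp
  have r2\<eta>: "r2 \<le> \<eta>" using \<eta>(2)[OF sp(1)] mult_left_mono[OF S1 r(2)] by simp
  have "a / \<sigma> * (T / a - \<gamma>) - \<gamma> * ((V - a) / \<sigma>) = (T - \<gamma> * V) / \<sigma>"
    using sp by (simp add: field_simps)
  then have "\<bar>a / \<sigma> * (T / a - \<gamma>) - \<gamma> * ((V - a) / \<sigma>)\<bar> \<le> (4 * r1 * S + r2 * V) / \<sigma>"
    using TV sp by (simp add: abs_div divide_right_mono)
  also have "\<dots> = 4 * (r1 * (S / \<sigma>)) + r2 * ((V - a) / \<sigma>) + r2 * (a / \<sigma>)"
    using sp by (simp add: field_simps)
  also have "\<dots> \<le> 4 * \<eta> + \<eta> * B + \<eta>"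
  proof -
    have "(V - a) / \<sigma> \<le> B" using VB by linarith
    then have "r2 * ((V - a) / \<sigma>) \<le> r2 * B" using r by (intro mult_left_mono) auto
    also have "\<dots> \<le> \<eta> * B" using r2\<eta> pos by (intro mult_right_mono) auto
    finally have "r2 * ((V - a) / \<sigma>) \<le> \<eta> * B" .
    moreover have "r2 * (a / \<sigma>) \<le> r2 * (S / \<sigma>)"
      using r \<sigma> sp by (intro mult_left_mono divide_right_mono) auto
    ultimately show ?thesis using \<eta>[OF sp(1)] by linarith
  qed
  finally show ?thesis by (simp add: algebra_simps)
qed

lemma gumbel_normalized_error_le:
  fixes T V a \<sigma> S s0 \<epsilon> \<eta> B :: real
  assumes \<sigma>: "0 \<le> \<sigma>" "\<sigma> \<le> a" "a \<le> S" and TV: "\<bar>T - s0 * V\<bar> \<le> \<epsilon> * s0 * (2 * S + V)"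
    and VB: "\<bar>(V - a) / \<sigma>\<bar> \<le> B" and s0: "0 < s0" and \<epsilon>: "0 \<le> \<epsilon>"
    and \<eta>: "0 < \<sigma> \<Longrightarrow> \<epsilon> * (S / \<sigma>) \<le> \<eta>" and pos: "0 \<le> \<eta>" "0 \<le> B"
  shows "\<bar>(T - a * s0) / (s0 * \<sigma>) - (V - a) / \<sigma>\<bar> \<le> \<eta> * (3 + B)"
proof (cases "\<sigma> = 0")
  case True then show ?thesis using pos by simp
next
  case False
  then have sp: "0 < \<sigma>" using \<sigma> by simp
  have S1: "1 \<le> S / \<sigma>" using sp \<sigma> by simp
  have "\<bar>(T - a * s0) / (s0 * \<sigma>) - (V - a) / \<sigma>\<bar> = \<bar>T - s0 * V\<bar> / (s0 * \<sigma>)"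
    using sp s0 by (simp add: field_simps abs_div)
  also have "\<dots> \<le> \<epsilon> * s0 * (2 * S + V) / (s0 * \<sigma>)"
    using TV sp s0 by (intro divide_right_mono) auto
  also have "\<dots> = \<epsilon> * (2 * (S / \<sigma>) + (V - a) / \<sigma> + a / \<sigma>)"
    using sp s0 by (simp add: field_simps)
  also have "\<dots> \<le> \<epsilon> * (3 * (S / \<sigma>) + B)"
  proof (intro mult_left_mono \<epsilon>)
    have "a / \<sigma> \<le> S / \<sigma>" using \<sigma> sp by (intro divide_right_mono) auto
    then show "2 * (S / \<sigma>) + (V - a) / \<sigma> + a / \<sigma> \<le> 3 * (S / \<sigma>) + B"
      using VB abs_ge_self[of "(V - a) / \<sigma>"] by linarith
  qed
  also have "\<dots> = 3 * (\<epsilon> * (S / \<sigma>)) + \<epsilon> * B" by (simp add: algebra_simps)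
  also have "\<dots> \<le> 3 * \<eta> + \<eta> * B"
  proof -
    have "\<epsilon> \<le> \<eta>" using \<eta>[OF sp] mult_left_mono[OF S1 \<epsilon>] by simp
    then show ?thesis using \<eta>[OF sp] mult_right_mono[of \<epsilon> \<eta> B] pos by linarith
  qed
  finally show ?thesis by (simp add: algebra_simps)
qed

section \<open>Error bounds on good samples\<close>

lemma frechet_sample_error_le:
  fixes u :: "nat \<Rightarrow> real"
  assumes rep: "Frechet_rep F \<gamma> c p b"
    and G: "mono_on {0<..<1} (Ginv (\<lambda>x. F (exp x)))"
    and good: "good_sample n k t a u" and a: "0 < a" and kn: "k + 1 \<le> n" and t: "t < 1"
    and pb: "\<And>y. 0 < y \<Longrightarrow> y \<le> t \<Longrightarrow> \<bar>p y\<bar> \<le> rp \<and> \<bar>b y\<bar> \<le> rb"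
    and r: "0 \<le> rp" "rp \<le> 1/2" "0 \<le> rb"
    and f: "\<And>j. 1 \<le> j \<Longrightarrow> 0 \<le> f j"
    and \<eta>: "0 < sigman k f \<Longrightarrow> rp * ((\<Sum>j=1..k. f j) / sigman k f) \<le> \<eta>"
      "0 < sigman k f \<Longrightarrow> rb * ((\<Sum>j=1..k. f j) / sigman k f) \<le> \<eta>"
    and VB: "\<bar>Vstar k n u f\<bar> \<le> B" and pos: "0 \<le> \<eta>" "0 \<le> B"
  shows "\<bar>an k f / sigman k f * (Tn k n (\<lambda>i. exp (Ginv (\<lambda>x. F (exp x)) (1 - u i))) f / an k f - \<gamma>)
      - \<gamma> * Vstar k n u f\<bar> \<le> \<eta> * (5 + B)"
proof -
  define w where "w j = ostat n u j" for j
  define Q where "Q x = Ginv (\<lambda>x. F (exp x)) (1 - x)" for x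
  have w: "0 < w j" "w j \<le> w (Suc j)" "w (Suc j) \<le> t" if "j \<in> {1..k}" for j
    using good_sample_ostat[OF good kn that] a unfolding w_def by auto
  have rep': "\<forall>x\<in>{0<..<1}. (\<lambda>t. b t / t) integrable_on {x..1} \<and>
      Q x = ln c + ln (1 + p x) - \<gamma> * ln x + integral {x..1} (\<lambda>t. b t / t)"
    using rep unfolding Frechet_rep_def Q_def by auto
  have "\<bar>(\<Sum>j=1..k. f j * (Q (w j) - Q (w (Suc j)))) - \<gamma> * (\<Sum>j=1..k. f j * ln (w (Suc j) / w j))\<bar>
      \<le> 4 * rp * (\<Sum>j=1..k. f j) + rb * (\<Sum>j=1..k. f j * ln (w (Suc j) / w j))"
    using f w t by (intro abs_sum_weighted_increments_le frechet_increment_dev_le[OF rep' _ _ _ _ pb r(2)])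
      auto
  moreover have "Tn k n (\<lambda>i. exp (Ginv (\<lambda>x. F (exp x)) (1 - u i))) f = (\<Sum>j=1..k. f j * (Q (w j) - Q (w (Suc j))))"
    unfolding w_def Q_def using good_sample_in_unit[OF good a] kn G by (intro Tn_quantile_eq) auto
  moreover have "Vn k n u f = (\<Sum>j=1..k. f j * ln (w (Suc j) / w j))"
    unfolding w_def by (rule Vn_ostat_eq[OF kn])
  ultimately show ?thesis
    using frechet_normalized_error_le[OF sigman_nonneg sigman_le_an an_le_sum, of k f]
      VB \<eta> r pos f unfolding Vstar_def by auto
qed

text \<open>On the range \<open>[exp (-K) / n, \<lambda> k / n]\<close> of a good sample, \<open>\<bar>ln x - ln (k/n)\<bar> \<le> ln \<lambda> + ln k + K\<close>;
  the factor \<open>ln k\<close> is absorbed by \<open>b\<close> through the \<open>g\<^sub>2 log k\<close> term of \<open>d\<^sub>n\<close>.\<close>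
lemma gumbel_s_rel_dev_on_sample_range:
  fixes k n :: nat and lam K r :: real
  defines "C \<equiv> 10 + 6 * ln lam + 6 * K"
  assumes c: "0 < c" and bi: "\<forall>u\<in>{0<..<1}. (\<lambda>t. b t / t) integrable_on {u..1}"
    and n: "0 < n" and k: "3 \<le> k" and lam: "1 < lam" and t: "lam * real k / real n < 1" and K: "0 \<le> K"
    and pb: "\<And>y. 0 < y \<Longrightarrow> y \<le> lam * real k / real n \<Longrightarrow> \<bar>p y\<bar> \<le> r \<and> \<bar>b y\<bar> \<le> rb"
    and rb: "0 \<le> rb" "rb * ln (real k) \<le> r" and r: "r \<le> 1 / (2 * C)"
  shows "0 < gumbel_s c p b (real k / real n)"
    and "x \<in> {exp (- K) / real n..lam * real k / real n} \<Longrightarrow>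
      \<bar>gumbel_s c p b x - gumbel_s c p b (real k / real n)\<bar> \<le> C * r * gumbel_s c p b (real k / real n)"
proof -
  define \<kappa> where "\<kappa> = real k / real n"
  have n: "0 < real n" using n by simp
  have lnk: "1 \<le> ln (real k)"
    using k exp_le ln_le_cancel_iff[of "exp 1" "real k"] by (simp add: ln_ge_iff)
  have lnlam: "0 < ln lam" using lam by simp
  have C: "10 \<le> C" "2 * (ln lam + 1 + K) \<le> C" unfolding C_def using lnlam K by auto
  have \<kappa>: "0 < \<kappa>" "\<kappa> \<le> lam * real k / real n" using n k lam unfolding \<kappa>_def by (auto simp: field_simps)
  have "0 \<le> rb * ln (real k)" using rb(1) lnk by simp
  then have r0: "0 \<le> r" using rb(2) by linarith
  have rb_le: "rb \<le> r" using mult_left_mono[OF lnk rb(1)] rb(2) by simp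
  have "1 / (2 * C) \<le> 1/2" using C by (simp add: field_simps)
  then have rhalf: "r \<le> 1/2" using r by linarith
  define D where "D = r * (ln lam + 1 + K)"
  have D: "D \<le> 1/2"
  proof -
    have "D \<le> (1 / (2 * C)) * (ln lam + 1 + K)"
      unfolding D_def using r lnlam K by (intro mult_right_mono) auto
    also have "\<dots> \<le> 1/2" using C by (simp add: divide_le_eq)
    finally show ?thesis .
  qed
  show "0 < gumbel_s c p b \<kappa>"
    using gumbel_s_rel_dev_le(2)[OF c bi \<kappa> t \<kappa> pb rhalf, of D] D r0 lnlam K by (simp add: D_def)
  assume x: "x \<in> {exp (- K) / real n..lam * real k / real n}"
  have xp: "0 < x" using x n by (auto intro: less_le_trans[rotated])
  have "\<bar>ln x - ln \<kappa>\<bar> \<le> ln lam + ln (real k) + K"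
  proof -
    have "ln x \<le> ln (lam * \<kappa>)" using x xp by (simp add: \<kappa>_def)
    moreover have "ln (exp (- K) / real n) \<le> ln x" using x xp n by (subst ln_le_cancel_iff) auto
    moreover have "ln (lam * \<kappa>) = ln lam + ln \<kappa>" "ln \<kappa> = ln (real k) - ln (real n)"
      "ln (exp (- K) / real n) = - K - ln (real n)"
      using lam n k unfolding \<kappa>_def by (simp_all add: ln_mult ln_div)
    ultimately show ?thesis using lnlam lnk K by linarith
  qed
  then have "rb * \<bar>ln x - ln \<kappa>\<bar> \<le> rb * (ln lam + ln (real k) + K)"
    using rb(1) by (rule mult_left_mono)
  also have "\<dots> = rb * ln lam + rb * ln (real k) + rb * K" by (simp add: algebra_simps)
  also have "\<dots> \<le> D"
  proof -
    have "rb * ln lam \<le> r * ln lam" "rb * K \<le> r * K"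
      using rb_le lnlam K by (intro mult_right_mono; simp)+
    then show ?thesis unfolding D_def using rb(2) by (simp add: algebra_simps)
  qed
  finally have "\<bar>gumbel_s c p b x - gumbel_s c p b \<kappa>\<bar> \<le> (6 * D + 4 * r) * gumbel_s c p b \<kappa>"
    using gumbel_s_rel_dev_le(1)[OF c bi \<kappa> t xp _ pb rhalf _ D] x by auto
  also have "6 * D + 4 * r = C * r" unfolding D_def C_def by (simp add: algebra_simps)
  finally show "\<bar>gumbel_s c p b x - gumbel_s c p b \<kappa>\<bar> \<le> C * r * gumbel_s c p b \<kappa>" .
qed

lemma gumbel_sample_error_le:
  fixes u :: "nat \<Rightarrow> real" and k n :: nat and lam K r :: real
  defines "\<kappa> \<equiv> real k / real n" and "C \<equiv> 10 + 6 * ln lam + 6 * K"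
  assumes rep: "Gumbel_rep F c d p b"
    and G: "mono_on {0<..<1} (Ginv (\<lambda>x. F (exp x)))"
    and good: "good_sample n k (lam * real k / real n) (exp (- K) / real n) u"
    and k: "3 \<le> k" "k + 1 \<le> n" and lam: "1 < lam" and t: "lam * real k / real n < 1" and K: "0 \<le> K"
    and pb: "\<And>y. 0 < y \<Longrightarrow> y \<le> lam * real k / real n \<Longrightarrow> \<bar>p y\<bar> \<le> r \<and> \<bar>b y\<bar> \<le> rb"
    and rb: "0 \<le> rb" "rb * ln (real k) \<le> r" and r: "r \<le> 1 / (2 * C)"
    and f: "\<And>j. 1 \<le> j \<Longrightarrow> 0 \<le> f j"
    and \<eta>: "0 < sigman k f \<Longrightarrow> C * r * ((\<Sum>j=1..k. f j) / sigman k f) \<le> \<eta>"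
    and VB: "\<bar>Vstar k n u f\<bar> \<le> B" and pos: "0 \<le> \<eta>" "0 \<le> B"
  shows "\<bar>(Tn k n (\<lambda>i. exp (Ginv (\<lambda>x. F (exp x)) (1 - u i))) f - an k f * gumbel_s c p b \<kappa>)
      / (gumbel_s c p b \<kappa> * sigman k f) - Vstar k n u f\<bar> \<le> \<eta> * (3 + B)"
proof -
  define s where "s = gumbel_s c p b"
  define w where "w j = ostat n u j" for j
  define Q where "Q x = Ginv (\<lambda>x. F (exp x)) (1 - x)" for x
  have c: "0 < c" and bi: "\<forall>u\<in>{0<..<1}. (\<lambda>t. b t / t) integrable_on {u..1}"
    and rep': "\<forall>x\<in>{0<..<1}. (\<lambda>t. s t / t) integrable_on {x..1} \<and> Q x = d - s x + integral {x..1} (\<lambda>t. s t / t)"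
    using rep unfolding Gumbel_rep_def s_def Q_def by auto
  have n: "0 < n" using k by simp
  note range = gumbel_s_rel_dev_on_sample_range[OF c bi n k(1) lam t K
      pb rb r[unfolded C_def], folded \<kappa>_def C_def s_def]
  have a: "0 < exp (- K) / real n" using n by simp
  have w: "exp (- K) / real n \<le> w j" "w j \<le> w (Suc j)" "w (Suc j) \<le> lam * real k / real n" if "j \<in> {1..k}" for j
    using good_sample_ostat[OF good k(2) that] unfolding w_def by auto
  have T_eq: "Tn k n (\<lambda>i. exp (Ginv (\<lambda>x. F (exp x)) (1 - u i))) f = (\<Sum>j=1..k. f j * (Q (w j) - Q (w (Suc j))))"
    unfolding w_def Q_def using good_sample_in_unit[OF good a] k G by (intro Tn_quantile_eq) auto
  have V_eq: "Vn k n u f = (\<Sum>j=1..k. f j * ln (w (Suc j) / w j))"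
    unfolding w_def by (rule Vn_ostat_eq[OF k(2)])
  have Cr: "0 \<le> C * r"
  proof -
    have "0 \<le> rb * ln (real k)" using rb(1) k(1) by simp
    moreover have "0 < ln lam" using lam by simp
    then have "0 < C" using K unfolding C_def by linarith
    ultimately show ?thesis using rb(2) by simp
  qed
  have "\<bar>(\<Sum>j=1..k. f j * (Q (w j) - Q (w (Suc j)))) - s \<kappa> * (\<Sum>j=1..k. f j * ln (w (Suc j) / w j))\<bar>
      \<le> 2 * (C * r * s \<kappa>) * (\<Sum>j=1..k. f j) + C * r * s \<kappa> * (\<Sum>j=1..k. f j * ln (w (Suc j) / w j))"
  proof (intro abs_sum_weighted_increments_le f)
    fix j assume j: "j \<in> {1..k}"
    show "\<bar>Q (w j) - Q (w (Suc j)) - s \<kappa> * ln (w (Suc j) / w j)\<bar>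
        \<le> 2 * (C * r * s \<kappa>) + C * r * s \<kappa> * ln (w (Suc j) / w j)"
      using w[OF j] a t by (intro gumbel_increment_dev_le[OF rep'] range(2)) auto
  qed auto
  then have TV: "\<bar>Tn k n (\<lambda>i. exp (Ginv (\<lambda>x. F (exp x)) (1 - u i))) f - s \<kappa> * Vn k n u f\<bar>
      \<le> C * r * s \<kappa> * (2 * (\<Sum>j=1..k. f j) + Vn k n u f)"
    unfolding T_eq V_eq by (simp add: algebra_simps)
  show ?thesis
    unfolding Vstar_def s_def[symmetric]
    by (rule gumbel_normalized_error_le[OF sigman_nonneg sigman_le_an an_le_sum TV _ range(1) Cr \<eta> pos])
      (use f VB in \<open>auto simp: Vstar_def\<close>)
qed

lemma SUP_abs_mult_less_ereal_imp_bound: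
  fixes p :: "real \<Rightarrow> real"
  assumes t: "0 < t" and X: "1 \<le> X" and less: "(SUP u\<in>{0<..t}. ereal \<bar>p u\<bar>) * ereal X < ereal \<eta>"
  shows "\<exists>r. 0 \<le> r \<and> r * X \<le> \<eta> \<and> (\<forall>u\<in>{0<..t}. \<bar>p u\<bar> \<le> r)"
proof -
  define g where "g = (SUP u\<in>{0<..t}. ereal \<bar>p u\<bar>)"
  have upper: "ereal \<bar>p u\<bar> \<le> g" if "u \<in> {0<..t}" for u
    unfolding g_def using that by (rule SUP_upper)
  then have "0 \<le> g" using t by (meson abs_ge_zero ereal_less_eq(5) greaterThanAtMost_iff order.trans order_refl)
  moreover have "g \<noteq> \<infinity>" using less X unfolding g_def[symmetric] by auto
  ultimately obtain r where r: "g = ereal r" "0 \<le> r" by (cases g) auto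
  then show ?thesis using less upper X unfolding g_def[symmetric] by (intro exI[of _ r]) auto
qed

lemma CU_eventually_less:
  assumes "CU Fa k g" "0 < \<eta>"
  shows "\<forall>\<^sub>F n in sequentially. \<forall>f\<in>Fa. g n * ereal ((\<Sum>j=1..k n. f j) / sigman (k n) f) < ereal \<eta>"
  using order_tendstoD(2)[OF assms(1)[unfolded CU_def], of "ereal \<eta>"] assms(2)
  by (auto elim!: eventually_mono dest: le_less_trans[OF SUP_upper])

lemma eventually_sample_size:
  fixes k :: "nat \<Rightarrow> nat"
  assumes k_inf: "filterlim k at_top sequentially" and k_small: "(\<lambda>n. real (k n) / real n) \<longlonglongrightarrow> 0"
    and lam: "1 < lam"
  shows "\<forall>\<^sub>F n in sequentially. 3 \<le> k n \<and> k n + 1 \<le> n \<and> lam * real (k n) / real n < 1"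
proof -
  have "\<forall>\<^sub>F n in sequentially. real (k n) / real n < 1 / lam"
    using order_tendstoD(2)[OF k_small] lam by simp
  moreover have "\<forall>\<^sub>F n in sequentially. 3 \<le> k n"
    using k_inf by (simp add: filterlim_at_top)
  moreover have "\<forall>\<^sub>F n in sequentially. 1 \<le> n" by (rule eventually_ge_at_top)
  ultimately show ?thesis
  proof eventually_elim
    case (elim n)
    then have n: "0 < real n" by simp
    then have "lam * real (k n) < real n" using elim lam by (simp add: field_simps)
    moreover have "1 * real (k n) \<le> lam * real (k n)" using lam by (intro mult_right_mono) auto
    ultimately have "k n < n" by linarith
    then show ?case using elim lam n by (simp add: field_simps)
  qed
qed

lemma frechet_sample_error_le_CU:
  fixes u :: "nat \<Rightarrow> real"
  assumes rep: "Frechet_rep F \<gamma> c p b"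
    and G: "mono_on {0<..<1} (Ginv (\<lambda>x. F (exp x)))"
    and good: "good_sample n k t a u" and a: "0 < a" and kn: "k + 1 \<le> n" and t: "0 < t" "t < 1"
    and f: "\<And>j. 1 \<le> j \<Longrightarrow> 0 \<le> f j"
    and cu1: "(SUP y\<in>{0<..t}. ereal \<bar>p y\<bar>) * ereal ((\<Sum>j=1..k. f j) / sigman k f) < ereal \<eta>"
    and cu2: "(SUP y\<in>{0<..t}. ereal \<bar>b y\<bar>) * ereal ((\<Sum>j=1..k. f j) / sigman k f) < ereal \<eta>"
    and \<eta>: "\<eta> \<le> 1/2" and VB: "\<bar>Vstar k n u f\<bar> \<le> B" and B: "0 \<le> B"
  shows "\<bar>an k f / sigman k f * (Tn k n (\<lambda>i. exp (Ginv (\<lambda>x. F (exp x)) (1 - u i))) f / an k f - \<gamma>)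
      - \<gamma> * Vstar k n u f\<bar> \<le> \<eta> * (5 + B)"
proof (cases "sigman k f = 0")
  case True
  have "0 \<le> \<eta>" using cu1 True by (simp add: zero_ereal_def[symmetric])
  then show ?thesis using B by (simp add: True Vstar_def)
next
  case False
  then have X: "1 \<le> (\<Sum>j=1..k. f j) / sigman k f"
    using sigman_nonneg[of k f] sigman_le_an[of k f] an_le_sum[of k f] f by auto
  obtain rp where rp: "0 \<le> rp" "rp * ((\<Sum>j=1..k. f j) / sigman k f) \<le> \<eta>" "\<forall>y\<in>{0<..t}. \<bar>p y\<bar> \<le> rp"
    using SUP_abs_mult_less_ereal_imp_bound[OF t(1) X cu1] by blast
  obtain rb where rb: "0 \<le> rb" "rb * ((\<Sum>j=1..k. f j) / sigman k f) \<le> \<eta>" "\<forall>y\<in>{0<..t}. \<bar>b y\<bar> \<le> rb"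
    using SUP_abs_mult_less_ereal_imp_bound[OF t(1) X cu2] by blast
  have "0 \<le> rp * ((\<Sum>j=1..k. f j) / sigman k f)" using rp(1) X by (intro mult_nonneg_nonneg) auto
  then have "0 \<le> \<eta>" using rp(2) by linarith
  moreover have "rp \<le> 1/2" using mult_left_mono[OF X rp(1)] rp(2) \<eta> by simp
  ultimately show ?thesis
    using rp rb B by (intro frechet_sample_error_le[OF rep G good a kn t(2), where rp=rp and rb=rb] f VB) auto
qed

lemma frechet_eventually_sup_error_le:
  fixes k :: "nat \<Rightarrow> nat"
  assumes rep: "Frechet_rep F \<gamma> c p b"
    and G: "mono_on {0<..<1} (Ginv (\<lambda>x. F (exp x)))"
    and lam: "1 < lam" and cu1: "CU1 Fa k p lam" and cu2: "CU2 Fa k b lam"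
    and k_inf: "filterlim k at_top sequentially" and k_small: "(\<lambda>n. real (k n) / real n) \<longlonglongrightarrow> 0"
    and Fa_pos: "\<forall>f\<in>Fa. \<forall>j\<ge>1. 0 \<le> f j" and e: "0 < e" and B: "0 \<le> B"
  shows "\<forall>\<^sub>F n in sequentially. \<forall>u.
    good_sample n (k n) (lam * real (k n) / real n) (exp (- K) / real n) u \<and>
    (\<forall>f\<in>Fa. \<bar>Vstar (k n) n u f\<bar> \<le> B) \<longrightarrow>
    (SUP f\<in>Fa. ereal \<bar>an (k n) f / sigman (k n) f *
        (Tn (k n) n (\<lambda>i. exp (Ginv (\<lambda>x. F (exp x)) (1 - u i))) f / an (k n) f - \<gamma>)
      - \<gamma> * Vstar (k n) n u f\<bar>) \<le> ereal e"
proof -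
  define \<eta> where "\<eta> = min (1/2) (e / (5 + B))"
  have \<eta>: "0 < \<eta>" using e B by (simp add: \<eta>_def)
  have \<eta>_half: "\<eta> \<le> 1/2" unfolding \<eta>_def by (rule min.cobounded1)
  have "\<eta> * (5 + B) \<le> e / (5 + B) * (5 + B)" using B unfolding \<eta>_def by (intro mult_right_mono) auto
  then have \<eta>e: "\<eta> * (5 + B) \<le> e" using B by simp
  show ?thesis
    using eventually_sample_size[OF k_inf k_small lam] CU_eventually_less[OF cu1[unfolded CU1_def] \<eta>]
      CU_eventually_less[OF cu2[unfolded CU2_def] \<eta>]
  proof eventually_elim
    case (elim n)
    have t: "0 < lam * real (k n) / real n" "lam * real (k n) / real n < 1" using elim lam by auto
    show ?case
    proof (intro allI impI SUP_least)
      fix u f assume u: "good_sample n (k n) (lam * real (k n) / real n) (exp (- K) / real n) u \<and>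
          (\<forall>f\<in>Fa. \<bar>Vstar (k n) n u f\<bar> \<le> B)"
        and f: "f \<in> Fa"
      have "\<bar>an (k n) f / sigman (k n) f *
          (Tn (k n) n (\<lambda>i. exp (Ginv (\<lambda>x. F (exp x)) (1 - u i))) f / an (k n) f - \<gamma>)
          - \<gamma> * Vstar (k n) n u f\<bar> \<le> \<eta> * (5 + B)"
        using u f elim Fa_pos B \<eta>_half unfolding g1n_def g2n_def
        by (intro frechet_sample_error_le_CU[OF rep G _ _ _ t]) auto
      then show "ereal \<bar>an (k n) f / sigman (k n) f *
          (Tn (k n) n (\<lambda>i. exp (Ginv (\<lambda>x. F (exp x)) (1 - u i))) f / an (k n) f - \<gamma>)
          - \<gamma> * Vstar (k n) n u f\<bar> \<le> ereal e"
        using \<eta>e by simp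
    qed
  qed
qed

lemma gumbel_sample_error_le_CU:
  fixes u :: "nat \<Rightarrow> real" and k n :: nat and lam K :: real
  defines "t \<equiv> lam * real k / real n" and "C \<equiv> 10 + 6 * ln lam + 6 * K"
  assumes rep: "Gumbel_rep F c d p b"
    and G: "mono_on {0<..<1} (Ginv (\<lambda>x. F (exp x)))"
    and good: "good_sample n k t (exp (- K) / real n) u"
    and k: "3 \<le> k" "k + 1 \<le> n" and lam: "1 < lam" and t: "t < 1" and K: "0 \<le> K"
    and f: "\<And>j. 1 \<le> j \<Longrightarrow> 0 \<le> f j"
    and cu: "max (SUP y\<in>{0<..t}. ereal \<bar>p y\<bar>) ((SUP y\<in>{0<..t}. ereal \<bar>b y\<bar>) * ereal (ln (real k)))
        * ereal ((\<Sum>j=1..k. f j) / sigman k f) < ereal \<eta>"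
    and \<eta>: "\<eta> \<le> 1 / (2 * C)" and VB: "\<bar>Vstar k n u f\<bar> \<le> B" and B: "0 \<le> B"
  shows "\<bar>(Tn k n (\<lambda>i. exp (Ginv (\<lambda>x. F (exp x)) (1 - u i))) f - an k f * gumbel_s c p b (real k / real n))
      / (gumbel_s c p b (real k / real n) * sigman k f) - Vstar k n u f\<bar> \<le> C * \<eta> * (3 + B)"
proof (cases "sigman k f = 0")
  case True
  have "0 \<le> \<eta>" using cu True by (simp add: zero_ereal_def[symmetric])
  moreover have "0 < C" using lam K ln_gt_zero[OF lam] unfolding C_def by linarith
  ultimately show ?thesis using B by (simp add: True Vstar_def)
next
  case False
  define X where "X = (\<Sum>j=1..k. f j) / sigman k f"
  have X: "1 \<le> X"
    using False sigman_nonneg[of k f] sigman_le_an[of k f] an_le_sum[of k f] f unfolding X_def by auto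
  have t0: "0 < t" using k lam unfolding t_def by simp
  have lnk: "1 \<le> ln (real k)" using k exp_le ln_le_cancel_iff[of "exp 1" "real k"] by (simp add: ln_ge_iff)
  note cu = cu[folded X_def]
  have "(SUP y\<in>{0<..t}. ereal \<bar>p y\<bar>) * ereal X \<le>
      max (SUP y\<in>{0<..t}. ereal \<bar>p y\<bar>) ((SUP y\<in>{0<..t}. ereal \<bar>b y\<bar>) * ereal (ln (real k))) * ereal X"
    using X by (intro ereal_mult_right_mono) auto
  then have "(SUP y\<in>{0<..t}. ereal \<bar>p y\<bar>) * ereal X < ereal \<eta>" using cu by (rule le_less_trans)
  then obtain r1 where r1: "0 \<le> r1" "r1 * X \<le> \<eta>" "\<forall>y\<in>{0<..t}. \<bar>p y\<bar> \<le> r1"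
    using SUP_abs_mult_less_ereal_imp_bound[OF t0 X] by blast
  have "(SUP y\<in>{0<..t}. ereal \<bar>b y\<bar>) * ereal (ln (real k) * X) \<le>
      max (SUP y\<in>{0<..t}. ereal \<bar>p y\<bar>) ((SUP y\<in>{0<..t}. ereal \<bar>b y\<bar>) * ereal (ln (real k))) * ereal X"
    using X unfolding times_ereal.simps(1)[symmetric] mult.assoc[symmetric]
    by (intro ereal_mult_right_mono) auto
  then have "(SUP y\<in>{0<..t}. ereal \<bar>b y\<bar>) * ereal (ln (real k) * X) < ereal \<eta>"
    using cu by (rule le_less_trans)
  moreover have "1 * 1 \<le> ln (real k) * X" by (rule mult_mono[OF lnk X]) (use lnk in auto)
  ultimately obtain r2 where r2: "0 \<le> r2" "r2 * (ln (real k) * X) \<le> \<eta>" "\<forall>y\<in>{0<..t}. \<bar>b y\<bar> \<le> r2"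
    using SUP_abs_mult_less_ereal_imp_bound[OF t0, of "ln (real k) * X" b \<eta>] by auto
  define r where "r = max r1 (r2 * ln (real k))"
  have rX: "r * X \<le> \<eta>" using r1(2) r2(2) unfolding r_def by (simp add: max_def algebra_simps)
  have r0: "0 \<le> r" and r2_le: "r2 * ln (real k) \<le> r" using r1(1) unfolding r_def by simp_all
  then have "r \<le> \<eta>" using mult_left_mono[OF X r0] rX by simp
  then have r_le: "r \<le> 1 / (2 * C)" using \<eta> by linarith
  have C: "0 < C" using lam K ln_gt_zero[OF lam] unfolding C_def by linarith
  then have C\<eta>: "0 \<le> C * \<eta>" using r0 \<open>r \<le> \<eta>\<close> by simp
  have \<eta>': "0 < sigman k f \<Longrightarrow> C * r * X \<le> C * \<eta>"
    using mult_left_mono[OF rX, of C] C by (simp add: mult.assoc)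
  have pb: "\<bar>p y\<bar> \<le> r \<and> \<bar>b y\<bar> \<le> r2" if "0 < y" "y \<le> t" for y
    using r1(3) r2(3) that unfolding r_def by force
  show ?thesis
    unfolding C_def
    by (rule gumbel_sample_error_le[OF rep G good[unfolded t_def] k lam t[unfolded t_def] K
          pb[unfolded t_def] r2(1) r2_le r_le[unfolded C_def] f \<eta>'[unfolded C_def X_def] VB
          C\<eta>[unfolded C_def] B])
qed

lemma gumbel_eventually_sup_error_le:
  fixes k :: "nat \<Rightarrow> nat"
  assumes rep: "Gumbel_rep F c d p b"
    and G: "mono_on {0<..<1} (Ginv (\<lambda>x. F (exp x)))"
    and lam: "1 < lam" and cu: "CU3 Fa k p b lam"
    and k_inf: "filterlim k at_top sequentially" and k_small: "(\<lambda>n. real (k n) / real n) \<longlonglongrightarrow> 0"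
    and Fa_pos: "\<forall>f\<in>Fa. \<forall>j\<ge>1. 0 \<le> f j" and e: "0 < e" and B: "0 \<le> B" and K: "0 \<le> K"
  shows "\<forall>\<^sub>F n in sequentially. \<forall>u.
    good_sample n (k n) (lam * real (k n) / real n) (exp (- K) / real n) u \<and>
    (\<forall>f\<in>Fa. \<bar>Vstar (k n) n u f\<bar> \<le> B) \<longrightarrow>
    (SUP f\<in>Fa. ereal \<bar>(Tn (k n) n (\<lambda>i. exp (Ginv (\<lambda>x. F (exp x)) (1 - u i))) f
        - an (k n) f * gumbel_s c p b (real (k n) / real n))
      / (gumbel_s c p b (real (k n) / real n) * sigman (k n) f) - Vstar (k n) n u f\<bar>) \<le> ereal e"
proof -
  define C where "C = 10 + 6 * ln lam + 6 * K"
  define \<eta> where "\<eta> = min (1 / (2 * C)) (e / (C * (3 + B)))"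
  have C: "0 < C" using lam K ln_gt_zero[OF lam] unfolding C_def by linarith
  have \<eta>: "0 < \<eta>" using e B C by (simp add: \<eta>_def)
  have \<eta>_le: "\<eta> \<le> 1 / (2 * C)" unfolding \<eta>_def by (rule min.cobounded1)
  have "C * \<eta> * (3 + B) \<le> C * (e / (C * (3 + B))) * (3 + B)"
    using B C unfolding \<eta>_def by (intro mult_right_mono mult_left_mono) auto
  then have \<eta>e: "C * \<eta> * (3 + B) \<le> e" using B C by simp
  show ?thesis
    using eventually_sample_size[OF k_inf k_small lam] CU_eventually_less[OF cu[unfolded CU3_def] \<eta>]
  proof eventually_elim
    case (elim n)
    show ?case
    proof (intro allI impI SUP_least)
      fix u f assume u: "good_sample n (k n) (lam * real (k n) / real n) (exp (- K) / real n) u \<and>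
          (\<forall>f\<in>Fa. \<bar>Vstar (k n) n u f\<bar> \<le> B)"
        and f: "f \<in> Fa"
      have "\<bar>(Tn (k n) n (\<lambda>i. exp (Ginv (\<lambda>x. F (exp x)) (1 - u i))) f
          - an (k n) f * gumbel_s c p b (real (k n) / real n))
          / (gumbel_s c p b (real (k n) / real n) * sigman (k n) f) - Vstar (k n) n u f\<bar>
          \<le> C * \<eta> * (3 + B)"
        unfolding C_def using u f elim Fa_pos B K lam \<eta>_le[unfolded C_def] unfolding dn_def g1n_def g2n_def
        by (intro gumbel_sample_error_le_CU[OF rep G]) auto
      then show "ereal \<bar>(Tn (k n) n (\<lambda>i. exp (Ginv (\<lambda>x. F (exp x)) (1 - u i))) f
          - an (k n) f * gumbel_s c p b (real (k n) / real n))
          / (gumbel_s c p b (real (k n) / real n) * sigman (k n) f) - Vstar (k n) n u f\<bar> \<le> ereal e"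
        using \<eta>e by simp
    qed
  qed
qed

text \<open>Only the representations of the quantile function and the weak convergence of \<open>V*_n\<close> enter the proof.\<close>
theorem corollary2:
  fixes M :: "'a measure" and U :: "nat \<Rightarrow> 'a \<Rightarrow> real" and F :: "real \<Rightarrow> real"
    and k :: "nat \<Rightarrow> nat" and Fa :: "(nat \<Rightarrow> real) set"
  assumes P: "prob_space M"
    and indep: "prob_space.indep_vars M (\<lambda>_. borel) U {1..}"
    and unif: "\<forall>i\<ge>1. distr M borel (U i) = uniform_measure lborel {0<..<1}"
    and F_mono: "mono F"
    and F_rc: "\<forall>x. continuous (at_right x) F"
    and F_bot: "(F \<longlongrightarrow> 0) at_bot"
    and F_top: "(F \<longlongrightarrow> 1) at_top"
    and F_gt1: "F 1 = 0"
    and k_bounds: "\<forall>n\<ge>1. 1 \<le> k n \<and> k n \<le> n"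
    and k_inf: "filterlim k at_top sequentially"
    and k_small: "(\<lambda>n. real (k n) / real n) \<longlonglongrightarrow> 0"
    and Fa_ne: "Fa \<noteq> {}"
    and Fa_pos: "\<forall>f\<in>Fa. \<forall>j\<ge>1. f j \<ge> 0"
    and KU: "KU1 Fa \<or> (KU2a Fa k \<and> KU2b Fa k)"
    and weak: "weak_conv_linf M Fa (Vproc Fa k U)"
  shows
    "(domain_Gumbel F \<longrightarrow>
       (\<forall>c d p b lam. Gumbel_rep F c d p b \<and> lam > 1 \<and> CU3 Fa k p b lam \<longrightarrow>
          conv_outer_prob M (\<lambda>n \<omega>. SUP f\<in>Fa. ereal \<bar>
             (Tn (k n) n (Xsample F U \<omega>) f - an (k n) f * gumbel_s c p b (real (k n) / real n))
               / (gumbel_s c p b (real (k n) / real n) * sigman (k n) f)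
             - Vstar (k n) n (\<lambda>i. U i \<omega>) f\<bar>))) \<and>
     (\<forall>\<gamma>>0. domain_Frechet F \<gamma> \<longrightarrow>
       (\<forall>c p b lam. Frechet_rep F \<gamma> c p b \<and> lam > 1 \<and> CU1 Fa k p lam \<and> CU2 Fa k b lam \<longrightarrow>
          conv_outer_prob M (\<lambda>n \<omega>. SUP f\<in>Fa. ereal \<bar>
             an (k n) f / sigman (k n) f * (Tn (k n) n (Xsample F U \<omega>) f / an (k n) f - \<gamma>)
             - \<gamma> * Vstar (k n) n (\<lambda>i. U i \<omega>) f\<bar>)))"
proof -
  interpret uniform_sample M U
    using P indep unif by (simp add: uniform_sample_def uniform_sample_axioms_def)
  have "mono (\<lambda>x. F (exp x))" using F_mono by (simp add: mono_def monoD)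
  moreover have "((\<lambda>x. F (exp x)) \<longlongrightarrow> 1) at_top" using filterlim_compose[OF F_top exp_at_top] .
  ultimately have G: "mono_on {0<..<1} (Ginv (\<lambda>x. F (exp x)))"
    using F_gt1 by (intro mono_on_Ginv) simp_all
  have X: "Xsample F U \<omega> = (\<lambda>i. exp (Ginv (\<lambda>x. F (exp x)) (1 - U i \<omega>)))" for \<omega>
    by (simp add: fun_eq_iff Xsample_def)
  note assemble = conv_outer_prob_if_small_on_good_samples[OF weak Fa_ne k_inf k_small]
  show ?thesis
    unfolding X
  proof (intro conjI impI allI; elim conjE)
    fix c d p b lam assume "Gumbel_rep F c d p b" "1 < lam" "CU3 Fa k p b lam"
    then show "conv_outer_prob M (\<lambda>n \<omega>. SUP f\<in>Fa. ereal \<bar>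
        (Tn (k n) n (\<lambda>i. exp (Ginv (\<lambda>x. F (exp x)) (1 - U i \<omega>))) f
          - an (k n) f * gumbel_s c p b (real (k n) / real n))
        / (gumbel_s c p b (real (k n) / real n) * sigman (k n) f) - Vstar (k n) n (\<lambda>i. U i \<omega>) f\<bar>)"
      by (intro assemble gumbel_eventually_sup_error_le[OF _ G _ _ k_inf k_small Fa_pos])
  next
    fix \<gamma> c p b lam assume "Frechet_rep F \<gamma> c p b" "1 < lam" "CU1 Fa k p lam" "CU2 Fa k b lam"
    then show "conv_outer_prob M (\<lambda>n \<omega>. SUP f\<in>Fa. ereal \<bar>an (k n) f / sigman (k n) f *
        (Tn (k n) n (\<lambda>i. exp (Ginv (\<lambda>x. F (exp x)) (1 - U i \<omega>))) f / an (k n) f - \<gamma>)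
        - \<gamma> * Vstar (k n) n (\<lambda>i. U i \<omega>) f\<bar>)"
      by (intro assemble frechet_eventually_sup_error_le[OF _ G _ _ _ k_inf k_small Fa_pos])
  qed
qed

end
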